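(* Let $n\in\mathbb N$, let $A$ be a Young function satisfying (C1), (C2), (C3), and let $\varphi$ be a gauge function. Then $\psi(st)\le\varphi(t)+t^nB(s)$ for all $s,t>0$.
   Context: A gauge function is a function $\varphi\colon[0,\infty)\to[0,\infty)$ that is increasing, continuous and vanishes only at $0$, and (standing assumption) such that $r\mapsto\varphi(r)/r^n$ is non-increasing on $(0,\infty)$. A Young function is a non-trivial convex $A\colon[0,\infty)\to[0,\infty]$ with $A(0)=0$; $\widetilde A(t)=\sup_{\tau\ge0}(\tau t-A(\tau))$. Conditions: (C1) if $n=1$, $\lim_{t\to\infty}t/A(t)=0$; if $n\ge2$, $\int^\infty (t/A(t))^{1/(n-1)}dt<\infty$. (C2) $0<A(t)<\infty$ for $t>0$. (C3) if $n=1$, $\lim_{t\to0^+}t/A(t)=\infty$; if $n\ge2$, $\int_0(t/A(t))^{1/(n-1)}dt=\infty$. $B=A$ if $n=1$; for $n\ge2$, $B$ is the Young conjugate of $t\mapsto t^{n'}\int_t^\infty\widetilde A(s)s^{-1-n'}ds$, $n'=n/(n-1)$. $J(0)=0$, $J(s)=s\,B^{-1}(\varphi(s)/s^n)$ for $s>0$ (an increasing bijection of $[0,\infty)$), and $\psi(r)=\varphi(J^{-1}(r))$ for $r\ge0$. *)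

theory Defs
  imports "HOL-Analysis.Analysis"
begin

definition gauge_function :: "nat \<Rightarrow> (real \<Rightarrow> real) \<Rightarrow> bool" where
  "gauge_function n \<phi> \<longleftrightarrow>
     mono_on {0..} \<phi> \<and> continuous_on {0..} \<phi> \<and> \<phi> 0 = 0 \<and>
     (\<forall>r>0. 0 < \<phi> r) \<and>
     (\<forall>r1 r2. 0 < r1 \<and> r1 \<le> r2 \<longrightarrow> \<phi> r2 / r2 ^ n \<le> \<phi> r1 / r1 ^ n)"

text \<open>Young function, real-valued on [0,oo) (infinite values are excluded by (C2) anyway).\<close>
definition young_function :: "(real \<Rightarrow> real) \<Rightarrow> bool" where
  "young_function A \<longleftrightarrow> convex_on {0..} A \<and> A 0 = 0 \<and> (\<forall>t\<ge>0. 0 \<le> A t) \<and>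
     (\<exists>t>0. A t \<noteq> 0)"

definition young_conj :: "(real \<Rightarrow> ennreal) \<Rightarrow> real \<Rightarrow> ennreal" where
  "young_conj F t = (SUP \<tau>\<in>{0..}. ennreal (\<tau> * t) - F \<tau>)"

definition cond_C1 :: "nat \<Rightarrow> (real \<Rightarrow> real) \<Rightarrow> bool" where
  "cond_C1 n A \<longleftrightarrow>
     (if n = 1 then ((\<lambda>t. t / A t) \<longlongrightarrow> 0) at_top
      else (\<integral>\<^sup>+ t\<in>{1..}. ennreal ((t / A t) powr (1 / (real n - 1))) \<partial>lborel) < \<infinity>)"

definition cond_C2 :: "(real \<Rightarrow> real) \<Rightarrow> bool" where
  "cond_C2 A \<longleftrightarrow> (\<forall>t>0. 0 < A t)"

definition cond_C3 :: "nat \<Rightarrow> (real \<Rightarrow> real) \<Rightarrow> bool" where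
  "cond_C3 n A \<longleftrightarrow>
     (if n = 1 then filterlim (\<lambda>t. t / A t) at_top (at_right 0)
      else (\<integral>\<^sup>+ t\<in>{0<..1}. ennreal ((t / A t) powr (1 / (real n - 1))) \<partial>lborel) = \<infinity>)"

definition conj_exp :: "nat \<Rightarrow> real" where
  "conj_exp n = real n / (real n - 1)"

definition funB :: "nat \<Rightarrow> (real \<Rightarrow> real) \<Rightarrow> real \<Rightarrow> ennreal" where
  "funB n A =
     (if n = 1 then (\<lambda>t. ennreal (A t))
      else young_conj (\<lambda>t. ennreal (t powr conj_exp n) *
              (\<integral>\<^sup>+ s\<in>{t..}. young_conj (\<lambda>\<tau>. ennreal (A \<tau>)) s
                    * ennreal (s powr (-1 - conj_exp n)) \<partial>lborel)))"

definition funB_inv :: "nat \<Rightarrow> (real \<Rightarrow> real) \<Rightarrow> real \<Rightarrow> real" where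
  "funB_inv n A r = Sup {t. 0 \<le> t \<and> funB n A t \<le> ennreal r}"

definition funJ :: "nat \<Rightarrow> (real \<Rightarrow> real) \<Rightarrow> (real \<Rightarrow> real) \<Rightarrow> real \<Rightarrow> real" where
  "funJ n A \<phi> s = (if s = 0 then 0 else s * funB_inv n A (\<phi> s / s ^ n))"

definition funPsi :: "nat \<Rightarrow> (real \<Rightarrow> real) \<Rightarrow> (real \<Rightarrow> real) \<Rightarrow> real \<Rightarrow> real" where
  "funPsi n A \<phi> r = \<phi> (THE s. 0 \<le> s \<and> funJ n A \<phi> s = r)"

end

theory Submission
  imports Defs
begin

text \<open>Given \<open>s, t > 0\<close>, write \<open>st = J(u) = u b\<close> with \<open>B(b) = \<phi>(u)/u\<^sup>n\<close>, so that
  \<open>\<psi>(st) = \<phi>(u) = u\<^sup>n B(b)\<close>. If \<open>u \<le> t\<close> then \<open>\<psi>(st) \<le> \<phi>(t)\<close>; otherwise \<open>b < s\<close>, and since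
  \<open>B(b)/b\<^sup>n\<close> is non-decreasing, \<open>u\<^sup>n B(b) \<le> u\<^sup>n b\<^sup>n B(s)/s\<^sup>n = t\<^sup>n B(s)\<close>.

  Making \<open>J\<close> a bijection of \<open>(0,\<infinity>)\<close> requires \<open>B\<close> to be continuous, with \<open>B(b)/b\<^sup>n\<close> strictly
  increasing where \<open>B > 0\<close> and tending to \<open>0\<close> at \<open>0\<close>. For \<open>n = 1\<close> this follows from convexity of \<open>A\<close>
  and (C3). For \<open>n \<ge> 2\<close>, \<open>B\<close> is the Young conjugate of
  \<open>E(\<sigma>) = \<sigma>\<^bsup>n'\<^esup> \<integral>\<^sub>\<sigma>\<^sup>\<infinity> Atilde(s) s\<^bsup>-1-n'\<^esup> ds\<close>: (C1) makes \<open>E\<close> finite, the substitution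
  \<open>\<sigma> \<mapsto> l\<^sup>n\<^sup>-\<^sup>1\<sigma>\<close> gives \<open>E(l\<^sup>n\<^sup>-\<^sup>1\<sigma>) \<ge> l\<^sup>n E(\<sigma>)\<close> and hence \<open>B(l y) \<le> l\<^sup>n B(y)\<close> for \<open>l \<le> 1\<close>, and
  (C3) makes \<open>E(\<sigma>)/\<sigma>\<^bsup>n'\<^esup>\<close> unbounded as \<open>\<sigma> \<rightarrow> 0\<close>, which yields \<open>B(b)/b\<^sup>n \<rightarrow> 0\<close>.\<close>

section \<open>The inequality for an abstract \<open>B\<close>\<close>

text \<open>The properties of \<open>B\<close> that the argument uses; \<open>B = A\<close> for \<open>n = 1\<close> and
  \<open>B = young_C123.B_real\<close> for \<open>n \<ge> 2\<close>.\<close>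
locale regular_B =
  fixes n :: nat and A B :: "real \<Rightarrow> real"
  assumes n_ge_1: "n \<ge> 1"
    and funB_eq: "t \<ge> 0 \<Longrightarrow> funB n A t = ennreal (B t)"
    and B_nonneg: "t \<ge> 0 \<Longrightarrow> B t \<ge> 0"
    and B_0: "B 0 = 0"
    and continuous_on_B: "continuous_on {0..} B"
    and B_ratio_mono: "0 < x \<Longrightarrow> x \<le> y \<Longrightarrow> B x * y ^ n \<le> x ^ n * B y"
    and B_ratio_strict_mono: "0 < x \<Longrightarrow> x < y \<Longrightarrow> B y > 0 \<Longrightarrow> B x * y ^ n < x ^ n * B y"
    and B_nontrivial: "\<exists>y>0. B y > 0"
    and B_ratio_tendsto_0: "((\<lambda>b. B b / b ^ n) \<longlongrightarrow> 0) (at_right 0)"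
begin

lemma B_mono:
  assumes "0 \<le> x" "x \<le> y"
  shows "B x \<le> B y"
proof (cases "x = 0")
  case True
  then show ?thesis using B_0 B_nonneg assms by auto
next
  case False
  then have "B x * y ^ n \<le> x ^ n * B y" using B_ratio_mono assms by auto
  also have "\<dots> \<le> y ^ n * B y"
    using B_nonneg[of y] assms by (intro mult_right_mono power_mono) auto
  finally show ?thesis using False assms by (simp add: mult.commute)
qed

lemma B_strict_mono:
  assumes "0 < x" "x < y" "B y > 0"
  shows "B x < B y"
proof -
  have "B x * y ^ n < x ^ n * B y" using B_ratio_strict_mono assms by auto
  also have "\<dots> \<le> y ^ n * B y" using assms by (intro mult_right_mono power_mono) auto
  finally show ?thesis using assms by (simp add: mult.commute)
qed

lemma B_power_growth:
  assumes "0 < y" "y \<le> b"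
  shows "B y * (b / y) ^ n \<le> B b"
  using B_ratio_mono[OF assms] assms by (simp add: field_simps power_divide)

lemma B_linear_growth:
  assumes "0 < y" "y \<le> b"
  shows "B y * (b / y) \<le> B b"
proof -
  have "b / y \<le> (b / y) ^ n"
    using assms n_ge_1 by (metis One_nat_def le_divide_eq_1_pos power_increasing power_one_right)
  then have "B y * (b / y) \<le> B y * (b / y) ^ n"
    using B_nonneg[of y] assms by (intro mult_left_mono) auto
  with B_power_growth[OF assms] show ?thesis by linarith
qed

lemma funB_inv_eq_Sup:
  assumes "r \<ge> 0"
  shows "funB_inv n A r = Sup ({0..} \<inter> B -` {..r})"
proof -
  have "{t. 0 \<le> t \<and> funB n A t \<le> ennreal r} = {0..} \<inter> B -` {..r}"
    using assms by (auto simp: funB_eq B_nonneg)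
  then show ?thesis unfolding funB_inv_def by simp
qed

text \<open>For \<open>r > 0\<close> the sublevel set \<open>{B \<le> r}\<close> is a compact interval \<open>[0, b]\<close>, and continuity
  forces \<open>B b = r\<close>.\<close>
lemma B_funB_inv:
  assumes r: "r > 0"
  shows "B (funB_inv n A r) = r" "funB_inv n A r > 0"
proof -
  define S where "S = {0..} \<inter> B -` {..r}"
  obtain y where y: "y > 0" "B y > 0" using B_nontrivial by blast
  have bounded: "t \<le> max y (r * y / B y)" if "t \<in> S" for t
  proof (cases "t \<le> y")
    case False
    then have "B y * (t / y) \<le> r" using B_linear_growth[of y t] that y unfolding S_def by auto
    then have "t \<le> r * y / B y" using y by (simp add: field_simps)
    then show ?thesis by simp
  qed simp
  have "0 \<in> S" using B_0 r unfolding S_def by auto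
  moreover have "bdd_above S" using bounded by (rule bdd_aboveI)
  moreover have "closed S" unfolding S_def
    by (rule continuous_closed_preimage[OF continuous_on_B]) auto
  ultimately have "Sup S \<in> S" using closed_contains_Sup by blast
  have b: "funB_inv n A r = Sup S" unfolding S_def using funB_inv_eq_Sup r by simp
  have b_nonneg: "funB_inv n A r \<ge> 0" and le: "B (funB_inv n A r) \<le> r"
    using \<open>Sup S \<in> S\<close> b unfolding S_def by auto
  have "B x > r" if "x > funB_inv n A r" for x
    using that b b_nonneg cSup_upper[OF _ \<open>bdd_above S\<close>, of x] unfolding S_def by force
  then have "eventually (\<lambda>x. r \<le> B x) (at_right (funB_inv n A r))"
    by (auto simp: eventually_at_right_field intro!: exI[of _ "funB_inv n A r + 1"] less_imp_le)
  moreover have "(B \<longlongrightarrow> B (funB_inv n A r)) (at_right (funB_inv n A r))"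
    using continuous_on_B b_nonneg unfolding continuous_on_def
    by (auto intro: tendsto_within_subset)
  ultimately have "r \<le> B (funB_inv n A r)" by (intro tendsto_lowerbound) auto
  with le show "B (funB_inv n A r) = r" by simp
  with B_0 r b_nonneg show "funB_inv n A r > 0" by (cases "funB_inv n A r = 0") auto
qed

lemma funB_inv_B:
  assumes "b > 0" "B b > 0"
  shows "funB_inv n A (B b) = b"
  using B_funB_inv[OF assms(2)] B_strict_mono[of "funB_inv n A (B b)" b]
    B_strict_mono[of b "funB_inv n A (B b)"] assms
  by (metis linorder_neqE_linordered_idom order_less_irrefl)

lemma isCont_funB_inv:
  assumes r: "r > 0"
  shows "isCont (funB_inv n A) r"
proof -
  define c d where "c = funB_inv n A (r/2)" and "d = funB_inv n A (2*r)"
  have c: "B c = r/2" "c > 0" and d: "B d = 2*r" "d > 0"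
    using B_funB_inv[of "r/2"] B_funB_inv[of "2*r"] r unfolding c_def d_def by auto
  have "c \<le> d" using B_mono[of d c] c d r by force
  have "continuous_on (B ` {c..d}) (funB_inv n A)"
  proof (rule continuous_on_inv)
    show "continuous_on {c..d} B" by (rule continuous_on_subset[OF continuous_on_B]) (use c in auto)
    show "\<forall>x\<in>{c..d}. funB_inv n A (B x) = x"
      using B_mono[of c] funB_inv_B c r by force
  qed auto
  moreover have "{r/2<..<2*r} \<subseteq> B ` {c..d}"
  proof
    fix s assume "s \<in> {r/2<..<2*r}"
    then have "\<exists>x. c \<le> x \<and> x \<le> d \<and> B x = s"
      using c d \<open>c \<le> d\<close> by (intro IVT' continuous_on_subset[OF continuous_on_B]) auto
    then show "s \<in> B ` {c..d}" by auto
  qed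
  ultimately have "continuous_on {r/2<..<2*r} (funB_inv n A)" by (rule continuous_on_subset)
  then show ?thesis using r by (subst (asm) continuous_on_eq_continuous_at) auto
qed

end

lemma gauge_functionD:
  assumes "gauge_function n \<phi>"
  shows "mono_on {0..} \<phi>" "continuous_on {0..} \<phi>" "\<phi> 0 = 0" "r > 0 \<Longrightarrow> \<phi> r > 0"
  using assms unfolding gauge_function_def by auto

locale regular_B_gauge = regular_B +
  fixes \<phi> :: "real \<Rightarrow> real"
  assumes gauge: "gauge_function n \<phi>"
begin

lemma phi_mono: "0 \<le> x \<Longrightarrow> x \<le> y \<Longrightarrow> \<phi> x \<le> \<phi> y"
  using gauge_functionD(1)[OF gauge] by (auto simp: mono_on_def)

lemmas phi_pos = gauge_functionD(4)[OF gauge]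

lemma B_funB_inv_phi:
  assumes "u > 0"
  shows "B (funB_inv n A (\<phi> u / u ^ n)) = \<phi> u / u ^ n" "funB_inv n A (\<phi> u / u ^ n) > 0"
  using B_funB_inv[of "\<phi> u / u ^ n"] phi_pos[OF assms] assms by auto

lemma funJ_eq: "u > 0 \<Longrightarrow> funJ n A \<phi> u = u * funB_inv n A (\<phi> u / u ^ n)"
  unfolding funJ_def by simp

lemma funJ_pos: "u > 0 \<Longrightarrow> funJ n A \<phi> u > 0"
  using B_funB_inv_phi(2) by (simp add: funJ_eq)

lemma continuous_on_funJ: "continuous_on {0<..} (funJ n A \<phi>)"
proof (intro continuous_at_imp_continuous_on ballI)
  fix u :: real assume "u \<in> {0<..}"
  then have u: "u > 0" by simp
  have "isCont \<phi> u"
    using continuous_on_interior[OF gauge_functionD(2)[OF gauge], of u] u by auto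
  then have "isCont (\<lambda>u. \<phi> u / u ^ n) u" using u by (intro continuous_intros) auto
  moreover have "isCont (funB_inv n A) (\<phi> u / u ^ n)"
    using u phi_pos[OF u] by (intro isCont_funB_inv) auto
  ultimately have "isCont (\<lambda>u. funB_inv n A (\<phi> u / u ^ n)) u" by (rule isCont_o2)
  then have "isCont (\<lambda>u. u * funB_inv n A (\<phi> u / u ^ n)) u" by (intro continuous_intros)
  moreover have "eventually (\<lambda>v. funJ n A \<phi> v = v * funB_inv n A (\<phi> v / v ^ n)) (nhds u)"
    using eventually_nhds_in_open[of "{0<..}" u] u by (auto elim!: eventually_mono simp: funJ_eq)
  ultimately show "isCont (funJ n A \<phi>) u" by (simp add: isCont_cong)
qed

lemma funJ_power_le:
  assumes u: "u > 0" and y: "y > 0" "B y > 0"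
  shows "funJ n A \<phi> u ^ n \<le> (u * y) ^ n + \<phi> u * (y ^ n / B y)"
proof -
  define b where "b = funB_inv n A (\<phi> u / u ^ n)"
  have b: "B b = \<phi> u / u ^ n" "b > 0" using B_funB_inv_phi[OF u] unfolding b_def by auto
  have J: "funJ n A \<phi> u = u * b" using funJ_eq[OF u] unfolding b_def .
  have "0 \<le> \<phi> u * (y ^ n / B y)" using phi_pos[OF u] y by simp
  moreover have "0 \<le> (u * y) ^ n" using u y by simp
  moreover have "(u * b) ^ n \<le> (u * y) ^ n \<or> (u * b) ^ n \<le> \<phi> u * (y ^ n / B y)"
  proof (cases "b < y")
    case False
    then have "B y * (b / y) ^ n \<le> \<phi> u / u ^ n" using B_power_growth[of y b] y b by simp
    then have "(u * b) ^ n * B y \<le> \<phi> u * y ^ n"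
      using y u by (simp add: power_divide power_mult_distrib field_simps)
    then show ?thesis using y by (simp add: mult_imp_le_div_pos)
  qed (use u b in \<open>auto intro: power_mono\<close>)
  ultimately show ?thesis unfolding J by linarith
qed

lemma funJ_small:
  assumes R: "R > 0"
  shows "\<exists>u\<in>{0<..<1}. funJ n A \<phi> u < R"
proof -
  obtain y where y: "y > 0" "B y > 0" using B_nontrivial by blast
  have "(\<phi> \<longlongrightarrow> \<phi> 0) (at 0 within {0..})"
    using gauge_functionD(2)[OF gauge] unfolding continuous_on_def by simp
  then have "(\<phi> \<longlongrightarrow> 0) (at_right 0)"
    unfolding gauge_functionD(3)[OF gauge] by (rule tendsto_within_subset) auto
  then have "((\<lambda>u. (u * y) ^ n + \<phi> u * (y ^ n / B y)) \<longlongrightarrow> (0 * y) ^ n + 0 * (y ^ n / B y)) (at_right 0)"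
    by (intro tendsto_intros)
  then have "((\<lambda>u. (u * y) ^ n + \<phi> u * (y ^ n / B y)) \<longlongrightarrow> 0) (at_right 0)"
    using n_ge_1 by (simp add: power_0_left)
  then have "eventually (\<lambda>u. (u * y) ^ n + \<phi> u * (y ^ n / B y) < R ^ n) (at_right 0)"
    using R by (intro order_tendstoD(2)) auto
  moreover have "eventually (\<lambda>u. u \<in> {0<..<1}) (at_right (0::real))"
    by (auto simp: eventually_at_right_field intro!: exI[of _ 1])
  ultimately have "eventually (\<lambda>u. u \<in> {0<..<1} \<and> (u * y) ^ n + \<phi> u * (y ^ n / B y) < R ^ n)
      (at_right 0)"
    by eventually_elim simp
  then obtain u where u: "u \<in> {0<..<1}" "(u * y) ^ n + \<phi> u * (y ^ n / B y) < R ^ n"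
    using eventually_happens'[OF trivial_limit_at_right_real] by blast
  then have "funJ n A \<phi> u ^ n < R ^ n" using funJ_power_le[of u y] y by force
  then have "funJ n A \<phi> u < R" by (rule power_less_imp_less_base) (use R in simp)
  with u show ?thesis by blast
qed

text \<open>If \<open>J\<close> stayed below \<open>R\<close>, then \<open>b = B\<^sup>-\<^sup>1(\<phi>(u)/u\<^sup>n) < R/u \<rightarrow> 0\<close> while
  \<open>B(b)/b\<^sup>n = \<phi>(u)/J(u)\<^sup>n \<ge> \<phi>(1)/R\<^sup>n\<close>, contradicting \<open>B(b)/b\<^sup>n \<rightarrow> 0\<close>.\<close>
lemma funJ_large:
  assumes R: "R > 0"
  shows "\<exists>u\<ge>1. funJ n A \<phi> u \<ge> R"
proof (rule ccontr)
  assume "\<not> ?thesis"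
  then have below: "u \<ge> 1 \<Longrightarrow> funJ n A \<phi> u < R" for u by auto
  define b where "b u = funB_inv n A (\<phi> u / u ^ n)" for u
  have b: "B (b u) = \<phi> u / u ^ n" "b u > 0" "funJ n A \<phi> u = u * b u" if "u \<ge> 1" for u
    using B_funB_inv_phi[of u] funJ_eq[of u] that unfolding b_def by auto
  have lim: "((\<lambda>u. R / u) \<longlongrightarrow> 0) at_top"
    by (intro tendsto_divide_0[OF tendsto_const] filterlim_at_top_imp_at_infinity[OF filterlim_ident])
  have upper: "eventually (\<lambda>u. b u \<le> R / u) at_top"
    using eventually_ge_at_top[of 1]
  proof eventually_elim
    case (elim u)
    have "u * b u < R" using below[OF elim] b(3)[OF elim] by simp
    then show ?case using elim by (simp add: field_simps)
  qed
  have pos: "eventually (\<lambda>u. b u > 0) at_top"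
    using eventually_ge_at_top[of 1] by eventually_elim (rule b(2))
  then have lower: "eventually (\<lambda>u. 0 \<le> b u) at_top" by eventually_elim simp
  have "(b \<longlongrightarrow> 0) at_top" by (rule tendsto_sandwich[OF lower upper tendsto_const lim])
  then have "filterlim b (at_right 0) at_top" using pos by (rule tendsto_imp_filterlim_at_right)
  from filterlim_compose[OF B_ratio_tendsto_0 this]
  have lim: "((\<lambda>u. B (b u) / b u ^ n) \<longlongrightarrow> 0) at_top" .
  have "eventually (\<lambda>u. \<phi> 1 / R ^ n \<le> B (b u) / b u ^ n) at_top"
    using eventually_ge_at_top[of 1]
  proof eventually_elim
    case (elim u)
    have "\<phi> 1 / R ^ n \<le> \<phi> u / funJ n A \<phi> u ^ n"
    proof (rule frac_le)
      show "0 \<le> \<phi> u" "\<phi> 1 \<le> \<phi> u" using phi_pos[of u] phi_mono[of 1 u] elim by auto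
      show "0 < funJ n A \<phi> u ^ n" using funJ_pos[of u] elim by simp
      show "funJ n A \<phi> u ^ n \<le> R ^ n"
        using below[OF elim] funJ_pos[of u] elim by (intro power_mono) auto
    qed
    also have "\<dots> = B (b u) / b u ^ n" using b[OF elim] elim by (simp add: power_mult_distrib)
    finally show ?case .
  qed
  then have "\<phi> 1 / R ^ n \<le> 0" by (rule tendsto_lowerbound[OF lim]) simp
  moreover have "\<phi> 1 / R ^ n > 0" using phi_pos[of 1] R by simp
  ultimately show False by simp
qed

lemma funJ_surj:
  assumes "R > 0"
  shows "\<exists>u>0. funJ n A \<phi> u = R"
proof -
  obtain u1 where u1: "u1 \<in> {0<..<1}" "funJ n A \<phi> u1 < R" using funJ_small[OF assms] by blast
  obtain u2 where u2: "u2 \<ge> 1" "funJ n A \<phi> u2 \<ge> R" using funJ_large[OF assms] by blast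
  have "\<exists>u. u1 \<le> u \<and> u \<le> u2 \<and> funJ n A \<phi> u = R"
    using u1 u2 by (intro IVT' continuous_on_subset[OF continuous_on_funJ]) auto
  then obtain u where "u1 \<le> u" "funJ n A \<phi> u = R" by blast
  with u1 show ?thesis by (intro exI[of _ u]) auto
qed

text \<open>With \<open>b\<^sub>i = B\<^sup>-\<^sup>1(\<phi>(v\<^sub>i)/v\<^sub>i\<^sup>n)\<close>, \<open>J(v\<^sub>1) \<ge> J(v\<^sub>2)\<close> forces \<open>b\<^sub>2 < b\<^sub>1\<close>; the strict monotonicity
  of \<open>B(b)/b\<^sup>n\<close> and the monotonicity of \<open>\<phi>\<close> then give \<open>\<phi>(v\<^sub>2) b\<^sub>1\<^sup>n < \<phi>(v\<^sub>2) b\<^sub>1\<^sup>n\<close>.\<close>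
lemma strict_mono_on_funJ: "strict_mono_on {0<..} (funJ n A \<phi>)"
proof (rule strict_mono_onI, rule ccontr)
  fix v1 v2 :: real
  assume v: "v1 \<in> {0<..}" "v2 \<in> {0<..}" "v1 < v2" and "\<not> funJ n A \<phi> v1 < funJ n A \<phi> v2"
  define b1 b2 where "b1 = funB_inv n A (\<phi> v1 / v1 ^ n)" and "b2 = funB_inv n A (\<phi> v2 / v2 ^ n)"
  have b1: "\<phi> v1 = v1 ^ n * B b1" "b1 > 0" and b2: "\<phi> v2 = v2 ^ n * B b2" "b2 > 0"
    using B_funB_inv_phi[of v1] B_funB_inv_phi[of v2] v unfolding b1_def b2_def by auto
  have J: "v2 * b2 \<le> v1 * b1"
    using \<open>\<not> _ < _\<close> v by (simp add: funJ_eq b1_def b2_def)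
  have "b2 < b1"
  proof (rule ccontr)
    assume "\<not> b2 < b1"
    then have "v1 * b1 < v2 * b2" using v b1 by (intro mult_less_le_imp_less) auto
    with J show False by simp
  qed
  have "B b1 > 0" using b1 phi_pos[of v1] v by (auto simp: zero_less_mult_iff)
  then have "v2 ^ n * (B b2 * b1 ^ n) < v2 ^ n * (b2 ^ n * B b1)"
    using B_ratio_strict_mono[of b2 b1] b2 \<open>b2 < b1\<close> v by simp
  also have "\<dots> = (v2 * b2) ^ n * B b1" by (simp add: power_mult_distrib)
  also have "\<dots> \<le> (v1 * b1) ^ n * B b1"
    using J b2 v \<open>B b1 > 0\<close> by (intro mult_right_mono power_mono) auto
  also have "\<dots> = \<phi> v1 * b1 ^ n" using b1 by (simp add: power_mult_distrib)
  also have "\<dots> \<le> \<phi> v2 * b1 ^ n" using phi_mono[of v1 v2] v b1 by (intro mult_right_mono) auto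
  also have "\<dots> = v2 ^ n * (B b2 * b1 ^ n)" using b2 by simp
  finally show False by simp
qed

lemma funPsi_funJ:
  assumes "u > 0"
  shows "funPsi n A \<phi> (funJ n A \<phi> u) = \<phi> u"
proof -
  have "(THE v. 0 \<le> v \<and> funJ n A \<phi> v = funJ n A \<phi> u) = u"
  proof (rule the_equality)
    fix v assume v: "0 \<le> v \<and> funJ n A \<phi> v = funJ n A \<phi> u"
    then have "v \<noteq> 0" using funJ_pos[OF assms] by (auto simp: funJ_def)
    then show "v = u"
      using v assms strict_mono_on_imp_inj_on[OF strict_mono_on_funJ] by (auto dest: inj_onD)
  qed (use assms in simp)
  then show ?thesis unfolding funPsi_def by simp
qed

lemma funPsi_le:
  assumes st: "0 < s" "0 < t"
  shows "funPsi n A \<phi> (s * t) \<le> \<phi> t + t ^ n * B s"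
proof -
  obtain u where u: "u > 0" "funJ n A \<phi> u = s * t" using funJ_surj[of "s * t"] st by auto
  define b where "b = funB_inv n A (\<phi> u / u ^ n)"
  have b: "\<phi> u = u ^ n * B b" "b > 0" using B_funB_inv_phi[OF u(1)] u unfolding b_def by auto
  have ub: "u * b = s * t" using u funJ_eq unfolding b_def by simp
  have "\<phi> u \<le> \<phi> t + t ^ n * B s"
  proof (cases "u \<le> t")
    case True
    moreover have "t ^ n * B s \<ge> 0" using B_nonneg[of s] st by simp
    ultimately show ?thesis using phi_mono[of u t] u by simp
  next
    case False
    have "b < s"
    proof (rule ccontr)
      assume "\<not> b < s"
      then have "s * t < b * u" using False st by (intro mult_le_less_imp_less) auto
      with ub show False by (simp add: mult.commute)
    qed
    have "\<phi> u * s ^ n = u ^ n * (B b * s ^ n)" using b by simp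
    also have "\<dots> \<le> u ^ n * (b ^ n * B s)"
      using B_ratio_mono[of b s] b \<open>b < s\<close> u by (intro mult_left_mono) auto
    also have "\<dots> = (t ^ n * B s) * s ^ n" using ub by (simp add: power_mult_distrib[symmetric] ac_simps)
    finally have "\<phi> u \<le> t ^ n * B s" using st by simp
    then show ?thesis using phi_pos[of t] st by linarith
  qed
  with funPsi_funJ[OF u(1)] u(2) show ?thesis by simp
qed

lemma funPsi_le_ennreal:
  assumes "0 < s" "0 < t"
  shows "ennreal (funPsi n A \<phi> (s * t)) \<le> ennreal (\<phi> t) + ennreal (t ^ n) * funB n A s"
proof -
  have "ennreal (funPsi n A \<phi> (s * t)) \<le> ennreal (\<phi> t + t ^ n * B s)"
    using funPsi_le[OF assms] by (rule ennreal_leI)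
  also have "\<dots> = ennreal (\<phi> t) + ennreal (t ^ n) * funB n A s"
    using phi_pos[of t] B_nonneg[of s] assms by (simp add: funB_eq ennreal_plus ennreal_mult)
  finally show ?thesis .
qed

end

section \<open>Convex functions vanishing at \<open>0\<close>; the case \<open>n = 1\<close>\<close>

lemma convex_on_ratio_le:
  fixes f :: "real \<Rightarrow> real"
  assumes "convex_on {0..} f" "f 0 = 0" "0 \<le> x" "x \<le> y" "y > 0"
  shows "f x * y \<le> x * f y"
proof -
  have "f ((1 - x/y) *\<^sub>R 0 + (x/y) *\<^sub>R y) \<le> (1 - x/y) * f 0 + (x/y) * f y"
    using assms by (intro convex_onD[OF assms(1)]) auto
  then have "f x \<le> (x/y) * f y" using assms by simp
  then show ?thesis using assms by (simp add: field_simps)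
qed

lemma convex_on_continuous_on_nonneg_reals:
  fixes f :: "real \<Rightarrow> real"
  assumes convex: "convex_on {0..} f" and f0: "f 0 = 0" and nonneg: "\<And>t. t \<ge> 0 \<Longrightarrow> f t \<ge> 0"
  shows "continuous_on {0..} f"
  unfolding continuous_on_eq_continuous_within
proof
  fix x :: real assume x: "x \<in> {0..}"
  show "continuous (at x within {0..}) f"
  proof (cases "x = 0")
    case False
    have "convex_on {0<..} f" using convex by (rule convex_on_subset) auto
    then have "continuous_on {0<..} f" by (intro convex_on_continuous) auto
    then have "isCont f x" using False x by (subst (asm) continuous_on_eq_continuous_at) auto
    then show ?thesis by (rule continuous_at_imp_continuous_within)
  next
    case True
    have "((\<lambda>t. t * f 1) \<longlongrightarrow> 0 * f 1) (at 0 within {0..})"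
      by (intro tendsto_intros)
    then have lim: "((\<lambda>t. t * f 1) \<longlongrightarrow> 0) (at 0 within {0..})" by simp
    have lin: "f t \<le> t * f 1" if "0 \<le> t" "t \<le> 1" for t
      using convex_on_ratio_le[OF convex f0 that] by simp
    have "eventually (\<lambda>t. t \<in> {-1<..<1}) (nhds (0::real))"
      by (rule eventually_nhds_in_open) auto
    then have upper: "eventually (\<lambda>t. f t \<le> t * f 1) (at 0 within {0..})"
      unfolding eventually_at_filter by eventually_elim (use lin in auto)
    have lower: "eventually (\<lambda>t. 0 \<le> f t) (at 0 within {0..})"
      by (auto simp: eventually_at_filter nonneg)
    have "(f \<longlongrightarrow> 0) (at 0 within {0..})"
      by (rule tendsto_sandwich[OF lower upper tendsto_const lim])
    then show ?thesis using True f0 by (simp add: continuous_within)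
  qed
qed

lemma convex_on_ratio_lower:
  fixes f :: "real \<Rightarrow> real"
  assumes convex: "convex_on {0..} f" and t: "0 < t" "t < x" and "x < y"
    and ratio: "x * f y \<le> f x * y"
  shows "f y / y * t \<le> f t"
proof -
  define c where "c = f y / y"
  define \<mu> where "\<mu> = (x - t) / (y - t)"
  have \<mu>: "0 \<le> \<mu>" "\<mu> \<le> 1" "\<mu> * (y - t) = x - t"
    using t \<open>x < y\<close> unfolding \<mu>_def by (auto simp: field_simps)
  then have "x = (1 - \<mu>) *\<^sub>R t + \<mu> *\<^sub>R y" by (simp add: algebra_simps)
  then have "f x \<le> (1 - \<mu>) * f t + \<mu> * f y"
    using \<mu> t \<open>x < y\<close> by (simp only:) (intro convex_onD[OF convex], auto)
  moreover have "c * x \<le> f x" "f y = c * y"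
    using ratio t \<open>x < y\<close> unfolding c_def by (auto simp: field_simps)
  ultimately have "c * x * (y - t) \<le> ((1 - \<mu>) * f t + \<mu> * (c * y)) * (y - t)"
    using t \<open>x < y\<close> by (intro mult_right_mono) auto
  also have "\<dots> = ((y - t) - \<mu> * (y - t)) * f t + (\<mu> * (y - t)) * (c * y)"
    by (simp add: algebra_simps)
  also have "\<dots> = (y - x) * f t + (x - t) * (c * y)" unfolding \<mu>(3) by simp
  finally have "(y - x) * (c * t) \<le> (y - x) * f t" by (simp add: algebra_simps)
  with \<open>x < y\<close> have "c * t \<le> f t" by (simp add: mult_le_cancel_left_pos)
  then show ?thesis unfolding c_def .
qed

lemma young_functionD:
  assumes "young_function A"
  shows "convex_on {0..} A" "A 0 = 0" "t \<ge> 0 \<Longrightarrow> A t \<ge> 0"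
  using assms unfolding young_function_def by auto

lemma convex_on_ratio_strict_mono:
  fixes f :: "real \<Rightarrow> real"
  assumes convex: "convex_on {0..} f" and pos: "\<And>t. t > 0 \<Longrightarrow> f t > 0"
    and lim: "filterlim (\<lambda>t. t / f t) at_top (at_right 0)"
    and xy: "0 < x" "x < y"
  shows "f x * y < x * f y"
proof (rule ccontr)
  assume "\<not> ?thesis"
  then have ratio: "x * f y \<le> f x * y" by simp
  have "eventually (\<lambda>t. y / f y < t / f t) (at_right 0)"
    using lim by (simp add: filterlim_at_top_dense)
  moreover have "eventually (\<lambda>t. 0 < t \<and> t < x) (at_right 0)"
    using xy by (auto simp: eventually_at_right_field intro!: exI[of _ x])
  ultimately have "eventually (\<lambda>t. False) (at_right (0::real))"
  proof eventually_elim
    case (elim t)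
    then have "f y / y * t \<le> f t" using convex_on_ratio_lower[OF convex _ _ \<open>x < y\<close> ratio] by auto
    then have "t / f t \<le> y / f y" using elim pos[of t] pos[of y] xy by (simp add: field_simps)
    with elim show False by simp
  qed
  then show False by simp
qed

lemma regular_B_dim_1:
  assumes young: "young_function A" and C2: "cond_C2 A" and C3: "cond_C3 1 A"
  shows "regular_B 1 A A"
proof
  note A = young_functionD[OF young]
  show "1 \<le> (1::nat)" by simp
  show "A 0 = 0" "t \<ge> 0 \<Longrightarrow> A t \<ge> 0" for t by (fact A(2), fact A(3))
  have A_pos: "t > 0 \<Longrightarrow> A t > 0" for t using C2 unfolding cond_C2_def by auto
  have C3': "filterlim (\<lambda>t. t / A t) at_top (at_right 0)" using C3 unfolding cond_C3_def by simp
  show "funB 1 A t = ennreal (A t)" for t unfolding funB_def by simp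
  show "continuous_on {0..} A" by (rule convex_on_continuous_on_nonneg_reals[OF A])
  show "A x * y ^ 1 \<le> x ^ 1 * A y" if "0 < x" "x \<le> y" for x y
    using convex_on_ratio_le[OF A(1,2)] that by simp
  show "\<exists>y>0. A y > 0" using A_pos[of 1] by (intro exI[of _ 1]) simp
  have "((\<lambda>t. inverse (t / A t)) \<longlongrightarrow> 0) (at_right 0)"
    by (rule tendsto_inverse_0_at_top[OF C3'])
  then show "((\<lambda>b. A b / b ^ 1) \<longlongrightarrow> 0) (at_right 0)" by (simp add: inverse_divide)
  show "A x * y ^ 1 < x ^ 1 * A y" if "0 < x" "x < y" for x y
    using convex_on_ratio_strict_mono[OF A(1) A_pos C3' that] by simp
qed

section \<open>The case \<open>n \<ge> 2\<close>\<close>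

lemma nn_integral_powr_atLeast:
  fixes q a :: real
  assumes q: "q > 1" and a: "a > 0"
  shows "(\<integral>\<^sup>+ s. ennreal (s powr (-q)) * indicator {a..} s \<partial>lborel) = ennreal (a powr (1 - q) / (q - 1))"
proof -
  define F where "F x = - (x powr (1 - q) / (q - 1))" for x :: real
  have "(\<integral>\<^sup>+ s. ennreal (s powr (-q)) * indicator {a..} s \<partial>lborel) = ennreal (0 - F a)"
  proof (rule nn_integral_FTC_atLeast)
    show "(F has_real_derivative x powr (-q)) (at x)" if "a \<le> x" for x
    proof -
      have "((\<lambda>x. x powr (1 - q)) has_real_derivative (1 - q) * x powr ((1 - q) - 1)) (at x)"
        using that a by (intro has_real_derivative_powr) auto
      then have "(F has_real_derivative - ((1 - q) * x powr ((1 - q) - 1) / (q - 1))) (at x)"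
        unfolding F_def by (intro DERIV_minus DERIV_cdivide)
      moreover have "- ((1 - q) * x powr ((1 - q) - 1) / (q - 1)) = x powr (-q)"
        using q by (simp add: field_simps)
      ultimately show ?thesis by simp
    qed
    have "((\<lambda>x. x powr (1 - q)) \<longlongrightarrow> 0) at_top"
      using q by (intro tendsto_neg_powr filterlim_ident) auto
    then have "(F \<longlongrightarrow> - (0 / (q - 1))) at_top" unfolding F_def by (intro tendsto_intros) (use q in auto)
    then show "(F \<longlongrightarrow> 0) at_top" by simp
  qed auto
  then show ?thesis unfolding F_def by simp
qed

abbreviation Atilde :: "(real \<Rightarrow> real) \<Rightarrow> real \<Rightarrow> ennreal" where
  "Atilde A \<equiv> young_conj (\<lambda>\<tau>. ennreal (A \<tau>))"

definition Atilde_tail :: "nat \<Rightarrow> (real \<Rightarrow> real) \<Rightarrow> real \<Rightarrow> ennreal" where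
  "Atilde_tail n A \<sigma> = (\<integral>\<^sup>+ s\<in>{\<sigma>..}. Atilde A s * ennreal (s powr (-1 - conj_exp n)) \<partial>lborel)"

definition funE :: "nat \<Rightarrow> (real \<Rightarrow> real) \<Rightarrow> real \<Rightarrow> ennreal" where
  "funE n A \<sigma> = ennreal (\<sigma> powr conj_exp n) * Atilde_tail n A \<sigma>"

lemma funB_eq_young_conj_funE: "n \<noteq> 1 \<Longrightarrow> funB n A = young_conj (funE n A)"
  unfolding funB_def funE_def Atilde_tail_def by simp

locale young_C123 =
  fixes n :: nat and A :: "real \<Rightarrow> real"
  assumes n_ge_2: "n \<ge> 2" and young: "young_function A" and C1: "cond_C1 n A"
    and C2: "cond_C2 A" and C3: "cond_C3 n A"
begin

abbreviation "p \<equiv> conj_exp n"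

lemma n_minus_1_pos: "real n - 1 > 0"
  using n_ge_2 by simp

lemma p_gt_1: "p > 1"
  and p_minus_1: "p - 1 = 1 / (real n - 1)"
  and n_minus_1_times_p: "(real n - 1) * p = n"
  using n_ge_2 unfolding conj_exp_def by (auto simp: field_simps)

lemma of_nat_n_minus_1: "real (n - 1) = real n - 1"
  using n_ge_2 by (simp add: of_nat_diff)

lemma power_n_minus_1_times: "x ^ (n - 1) * x = (x :: real) ^ n"
  using power_Suc2[of x "n - 1"] n_ge_2 by simp

lemma A_nonneg: "t \<ge> 0 \<Longrightarrow> A t \<ge> 0" and A_0: "A 0 = 0" and convex_on_A: "convex_on {0..} A"
  using young_functionD[OF young] by auto

lemma A_pos: "t > 0 \<Longrightarrow> A t > 0"
  using C2 unfolding cond_C2_def by auto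

lemma continuous_on_A: "continuous_on {0..} A"
  by (rule convex_on_continuous_on_nonneg_reals[OF convex_on_A A_0 A_nonneg])

text \<open>\<open>A\<close> is only meaningful on \<open>[0,\<infinity>)\<close>; \<open>Aext\<close> is a Borel measurable extension of it.\<close>
definition Aext :: "real \<Rightarrow> real" where
  "Aext t = A (max 0 t)"

lemma Aext_eq: "t \<ge> 0 \<Longrightarrow> Aext t = A t"
  unfolding Aext_def by simp

lemma Aext_measurable[measurable]: "Aext \<in> borel_measurable borel"
proof -
  have "continuous_on UNIV (A \<circ> (\<lambda>t. max 0 t))"
    by (rule continuous_on_compose[OF _ continuous_on_subset[OF continuous_on_A]])
       (auto intro!: continuous_intros)
  then show ?thesis unfolding Aext_def by (intro borel_measurable_continuous_onI) (simp add: o_def)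
qed

lemma C1_integral:
  "(\<integral>\<^sup>+ t. ennreal ((t / Aext t) powr (1 / (real n - 1))) * indicator {1..} t \<partial>lborel) < \<infinity>"
proof -
  have "(\<integral>\<^sup>+ t. ennreal ((t / Aext t) powr (1 / (real n - 1))) * indicator {1..} t \<partial>lborel)
      = (\<integral>\<^sup>+ t\<in>{1..}. ennreal ((t / A t) powr (1 / (real n - 1))) \<partial>lborel)"
    by (intro nn_integral_cong) (auto simp: Aext_eq split: split_indicator)
  also have "\<dots> < \<infinity>" using C1 n_ge_2 unfolding cond_C1_def by auto
  finally show ?thesis .
qed

lemma C3_integral:
  "(\<integral>\<^sup>+ t. ennreal ((t / Aext t) powr (1 / (real n - 1))) * indicator {0<..1} t \<partial>lborel) = \<infinity>"
proof -
  have "(\<integral>\<^sup>+ t. ennreal ((t / Aext t) powr (1 / (real n - 1))) * indicator {0<..1} t \<partial>lborel)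
      = (\<integral>\<^sup>+ t\<in>{0<..1}. ennreal ((t / A t) powr (1 / (real n - 1))) \<partial>lborel)"
    by (intro nn_integral_cong) (auto simp: Aext_eq split: split_indicator)
  also have "\<dots> = \<infinity>" using C3 n_ge_2 unfolding cond_C3_def by auto
  finally show ?thesis .
qed

lemma Atilde_ge: "\<tau> \<ge> 0 \<Longrightarrow> ennreal (s * \<tau> - A \<tau>) \<le> Atilde A s"
  unfolding young_conj_def
  by (rule SUP_upper2[of \<tau>]) (auto simp: ennreal_minus A_nonneg mult.commute)

lemma Atilde_nonpos: "s \<le> 0 \<Longrightarrow> Atilde A s = 0"
  unfolding young_conj_def
proof (intro antisym SUP_least)
  fix \<tau> :: real assume "s \<le> 0" "\<tau> \<in> {0..}"
  then have "ennreal (\<tau> * s) = 0" by (simp add: ennreal_eq_0_iff mult_nonneg_nonpos)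
  then show "ennreal (\<tau> * s) - ennreal (A \<tau>) \<le> 0" by simp
qed simp

lemma Atilde_mono: "s \<le> s' \<Longrightarrow> Atilde A s \<le> Atilde A s'"
  unfolding young_conj_def
  by (auto intro!: SUP_mono bexI ennreal_minus_mono ennreal_leI mult_left_mono)

lemma Atilde_superlinear:
  assumes "0 < \<sigma>" "\<sigma> \<le> s"
  shows "ennreal (s / \<sigma>) * Atilde A \<sigma> \<le> Atilde A s"
  unfolding young_conj_def SUP_mult_left_ennreal
proof (rule SUP_least)
  fix \<tau> :: real assume "\<tau> \<in> {0..}"
  then have \<tau>: "\<tau> \<ge> 0" "A \<tau> \<ge> 0" using A_nonneg by auto
  have "ennreal (s / \<sigma>) * (ennreal (\<tau> * \<sigma>) - ennreal (A \<tau>)) \<le> ennreal (\<tau> * s) - ennreal (A \<tau>)"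
  proof (cases "A \<tau> \<le> \<tau> * \<sigma>")
    case True
    have "1 * A \<tau> \<le> s / \<sigma> * A \<tau>" using \<tau> assms by (intro mult_right_mono) auto
    then have "s / \<sigma> * (\<tau> * \<sigma> - A \<tau>) \<le> \<tau> * s - A \<tau>"
      using assms by (simp add: right_diff_distrib)
    then have "ennreal (s / \<sigma> * (\<tau> * \<sigma> - A \<tau>)) \<le> ennreal (\<tau> * s - A \<tau>)" by (rule ennreal_leI)
    then show ?thesis using True \<tau> assms by (simp add: ennreal_minus ennreal_mult[symmetric])
  next
    case False
    then have "ennreal (\<tau> * \<sigma>) - ennreal (A \<tau>) = 0" using \<tau> by (simp add: ennreal_minus ennreal_eq_0_iff)
    then show ?thesis by simp
  qed
  also have "\<dots> \<le> (SUP \<tau>\<in>{0..}. ennreal (\<tau> * s) - ennreal (A \<tau>))"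
    using \<tau> by (intro SUP_upper) auto
  finally show "ennreal (s / \<sigma>) * (ennreal (\<tau> * \<sigma>) - ennreal (A \<tau>))
      \<le> (SUP \<tau>\<in>{0..}. ennreal (\<tau> * s) - ennreal (A \<tau>))" .
qed

definition level_set :: "real \<Rightarrow> real \<Rightarrow> real set" where
  "level_set c s = {\<tau>. 0 \<le> \<tau> \<and> c * A \<tau> \<le> s * \<tau>}"

lemma closed_level_set: "closed (level_set c s)"
proof -
  have "level_set c s = {0..} \<inter> (\<lambda>\<tau>. c * A \<tau> - s * \<tau>) -` {..0}"
    unfolding level_set_def by auto
  also have "closed \<dots>"
    by (intro continuous_closed_preimage continuous_intros continuous_on_A)
  finally show ?thesis .
qed

lemma level_set_sets[measurable]: "level_set c s \<in> sets borel"
  using closed_level_set by simp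

lemma level_set_downclosed:
  assumes "\<tau> \<in> level_set c s" "0 \<le> \<tau>'" "\<tau>' \<le> \<tau>" "c \<ge> 0"
  shows "\<tau>' \<in> level_set c s"
proof (cases "\<tau> = 0")
  case False
  then have "\<tau> > 0" using assms unfolding level_set_def by simp
  have "c * A \<tau>' * \<tau> \<le> \<tau>' * (c * A \<tau>)"
    using mult_left_mono[OF convex_on_ratio_le[OF convex_on_A A_0 assms(2,3) \<open>\<tau> > 0\<close>] \<open>c \<ge> 0\<close>]
    by (simp add: algebra_simps)
  also have "\<dots> \<le> \<tau>' * (s * \<tau>)" using assms unfolding level_set_def by (intro mult_left_mono) auto
  finally show ?thesis using \<open>\<tau> > 0\<close> assms(2) unfolding level_set_def by (simp add: algebra_simps)
qed (use assms A_0 in \<open>auto simp: level_set_def\<close>)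

lemma Atilde_le_level_set:
  assumes "s > 0"
  shows "Atilde A s \<le> ennreal s * emeasure lborel (level_set 1 s)"
  unfolding young_conj_def
proof (rule SUP_least)
  fix \<tau> :: real assume \<tau>: "\<tau> \<in> {0..}"
  show "ennreal (\<tau> * s) - ennreal (A \<tau>) \<le> ennreal s * emeasure lborel (level_set 1 s)"
  proof (cases "A \<tau> \<le> s * \<tau>")
    case True
    then have "{0..\<tau>} \<subseteq> level_set 1 s"
      using level_set_downclosed[of \<tau> 1 s] \<tau> by (auto simp: level_set_def)
    then have "ennreal \<tau> \<le> emeasure lborel (level_set 1 s)"
      using emeasure_mono[of "{0..\<tau>}" "level_set 1 s" lborel] \<tau> level_set_sets by simp
    then have "ennreal s * ennreal \<tau> \<le> ennreal s * emeasure lborel (level_set 1 s)"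
      by (rule mult_left_mono) simp
    moreover have "ennreal (\<tau> * s) - ennreal (A \<tau>) \<le> ennreal s * ennreal \<tau>"
      using \<tau> assms by (simp add: ennreal_minus A_nonneg ennreal_mult[symmetric] mult.commute ennreal_leI)
    ultimately show ?thesis by (rule order_trans[rotated])
  next
    case False
    then have "ennreal (\<tau> * s) - ennreal (A \<tau>) = 0"
      using \<tau> A_nonneg[of \<tau>] by (simp add: ennreal_minus ennreal_eq_0_iff mult.commute)
    then show ?thesis by simp
  qed
qed

lemma Atilde_ge_level_set:
  assumes s: "s > 0"
  shows "ennreal (s / 2) * emeasure lborel (level_set 2 s) \<le> Atilde A s"
proof -
  define S where "S = level_set 2 s"
  have mem: "ennreal (s / 2 * \<tau>) \<le> Atilde A s" if "\<tau> \<in> S" for \<tau>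
  proof -
    have "s / 2 * \<tau> \<le> s * \<tau> - A \<tau>" using that unfolding S_def level_set_def by (auto simp: field_simps)
    then have "ennreal (s / 2 * \<tau>) \<le> ennreal (s * \<tau> - A \<tau>)" by (rule ennreal_leI)
    also have "\<dots> \<le> Atilde A s" using that unfolding S_def level_set_def by (intro Atilde_ge) auto
    finally show ?thesis .
  qed
  have "0 \<in> S" unfolding S_def level_set_def using A_0 by simp
  show ?thesis
  proof (cases "bdd_above S")
    case True
    have "Sup S \<in> S" using closed_contains_Sup[of S] True \<open>0 \<in> S\<close> closed_level_set unfolding S_def
      by blast
    have S_eq: "S = {0..Sup S}"
    proof
      show "S \<subseteq> {0..Sup S}" using cSup_upper[OF _ True] unfolding S_def level_set_def by auto
      show "{0..Sup S} \<subseteq> S"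
        using level_set_downclosed[of "Sup S" 2 s] \<open>Sup S \<in> S\<close> unfolding S_def by auto
    qed
    have "Sup S \<ge> 0" using \<open>Sup S \<in> S\<close> unfolding S_def level_set_def by simp
    then have "emeasure lborel S = ennreal (Sup S)" by (subst S_eq) simp
    then have "ennreal (s / 2) * emeasure lborel S = ennreal (s / 2 * Sup S)"
      using s \<open>Sup S \<ge> 0\<close> by (simp add: ennreal_mult[symmetric])
    also have "\<dots> \<le> Atilde A s" by (rule mem[OF \<open>Sup S \<in> S\<close>])
    finally show ?thesis unfolding S_def .
  next
    case False
    have "of_nat k \<le> Atilde A s" for k
    proof -
      obtain \<tau> where "\<tau> \<in> S" "\<tau> > 2 * real k / s"
        using False unfolding bdd_above_def by (meson not_le)
      then have "ennreal (real k) \<le> ennreal (s / 2 * \<tau>)" using s by (intro ennreal_leI) (simp add: field_simps)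
      then show ?thesis using mem[OF \<open>\<tau> \<in> S\<close>] by (simp add: ennreal_of_nat_eq_real_of_nat)
    qed
    then have "(SUP k. of_nat k :: ennreal) \<le> Atilde A s" by (rule SUP_least)
    then show ?thesis by (simp add: ennreal_SUP_of_nat_eq_top top_unique)
  qed
qed


lemma mult_powr_minus_1_minus_p: "s > 0 \<Longrightarrow> s * s powr (-1 - p) = s powr (-p)"
  by (simp add: powr_mult_base)

lemma powr_neg_conj_exp: "s > 0 \<Longrightarrow> ennreal s * ennreal (s powr (-1 - p)) = ennreal (s powr (-p))"
  by (simp add: ennreal_mult[symmetric] mult_powr_minus_1_minus_p)

lemma powr_one_minus_p: "(x / y) powr (1 - p) = (y / x) powr (1 / (real n - 1))"
proof -
  have "1 - p = - (1 / (real n - 1))" using p_minus_1 by simp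
  then show ?thesis by (simp add: powr_minus powr_divide)
qed

lemma Atilde_tail_antimono: "\<sigma> \<le> \<sigma>' \<Longrightarrow> Atilde_tail n A \<sigma>' \<le> Atilde_tail n A \<sigma>"
  unfolding Atilde_tail_def by (intro nn_integral_mono) (auto split: split_indicator)

text \<open>Tonelli: integrating the level sets of \<open>c A(\<tau>)/\<tau>\<close> against \<open>k s\<^sup>-\<^sup>p\<close> over \<open>s \<ge> \<sigma>\<close>.
  At \<open>\<tau> = 0\<close> the right-hand side relies on \<open>x / 0 = 0\<close>.\<close>
lemma nn_integral_level_set:
  assumes \<sigma>: "\<sigma> > 0" and c: "c > 0" and k: "k \<ge> 0"
  shows "(\<integral>\<^sup>+ s. emeasure lborel (level_set c s) * (ennreal (k * s powr (-p)) * indicator {\<sigma>..} s) \<partial>lborel)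
    = (\<integral>\<^sup>+ \<tau>. ennreal (k * max \<sigma> (c * Aext \<tau> / \<tau>) powr (1 - p) / (p - 1)) * indicator {0..} \<tau> \<partial>lborel)"
proof -
  define G where "G \<tau> s = (if 0 \<le> \<tau> \<and> c * Aext \<tau> \<le> s * \<tau> \<and> \<sigma> \<le> s then ennreal (k * s powr (-p)) else 0)"
    for \<tau> s :: real
  have "case_prod G \<in> borel_measurable (lborel \<Otimes>\<^sub>M lborel)" unfolding G_def by measurable
  have "emeasure lborel (level_set c s) * (ennreal (k * s powr (-p)) * indicator {\<sigma>..} s)
      = (\<integral>\<^sup>+ \<tau>. G \<tau> s \<partial>lborel)" for s
  proof -
    have "emeasure lborel (level_set c s) * (ennreal (k * s powr (-p)) * indicator {\<sigma>..} s)
        = (\<integral>\<^sup>+ \<tau>. indicator (level_set c s) \<tau> * (ennreal (k * s powr (-p)) * indicator {\<sigma>..} s) \<partial>lborel)"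
      by (simp add: nn_integral_multc)
    also have "\<dots> = (\<integral>\<^sup>+ \<tau>. G \<tau> s \<partial>lborel)"
      by (intro nn_integral_cong) (auto simp: G_def level_set_def Aext_eq split: split_indicator)
    finally show ?thesis .
  qed
  then have "(\<integral>\<^sup>+ s. emeasure lborel (level_set c s) * (ennreal (k * s powr (-p)) * indicator {\<sigma>..} s) \<partial>lborel)
      = (\<integral>\<^sup>+ s. \<integral>\<^sup>+ \<tau>. G \<tau> s \<partial>lborel \<partial>lborel)" by simp
  also have "\<dots> = (\<integral>\<^sup>+ \<tau>. \<integral>\<^sup>+ s. G \<tau> s \<partial>lborel \<partial>lborel)"
    by (rule lborel_pair.Fubini') fact
  also have "\<dots> = (\<integral>\<^sup>+ \<tau>. ennreal (k * max \<sigma> (c * Aext \<tau> / \<tau>) powr (1 - p) / (p - 1)) * indicator {0..} \<tau> \<partial>lborel)"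
  proof (intro nn_integral_cong)
    fix \<tau> :: real
    show "(\<integral>\<^sup>+ s. G \<tau> s \<partial>lborel)
        = ennreal (k * max \<sigma> (c * Aext \<tau> / \<tau>) powr (1 - p) / (p - 1)) * indicator {0..} \<tau>"
    proof (cases "\<tau> \<ge> 0")
      case True
      define a where "a = max \<sigma> (c * Aext \<tau> / \<tau>)"
      have a: "a > 0" using \<sigma> unfolding a_def by simp
      have "G \<tau> s = ennreal k * (ennreal (s powr (-p)) * indicator {a..} s)" for s
      proof (cases "\<tau> = 0")
        case False
        then have "c * Aext \<tau> \<le> s * \<tau> \<longleftrightarrow> c * Aext \<tau> / \<tau> \<le> s" using True by (simp add: pos_divide_le_eq)
        then show ?thesis using True k by (auto simp: G_def a_def ennreal_mult split: split_indicator)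
      qed (use \<sigma> k in \<open>simp add: G_def a_def Aext_eq A_0 ennreal_mult split: split_indicator\<close>)
      then have "(\<integral>\<^sup>+ s. G \<tau> s \<partial>lborel) = ennreal k * ennreal (a powr (1 - p) / (p - 1))"
        using a p_gt_1 by (simp add: nn_integral_cmult nn_integral_powr_atLeast)
      also have "\<dots> = ennreal (k * a powr (1 - p) / (p - 1))"
        using k p_gt_1 by (simp add: ennreal_mult[symmetric])
      finally show ?thesis using True unfolding a_def by simp
    qed (simp add: G_def)
  qed
  finally show ?thesis .
qed

lemma Atilde_tail_le_level_set:
  assumes \<sigma>: "\<sigma> > 0"
  shows "Atilde_tail n A \<sigma>
    \<le> (\<integral>\<^sup>+ s. emeasure lborel (level_set 1 s) * (ennreal (1 * s powr (-p)) * indicator {\<sigma>..} s) \<partial>lborel)"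
  unfolding Atilde_tail_def
proof (intro nn_integral_mono)
  fix s :: real
  show "Atilde A s * ennreal (s powr (-1 - p)) * indicator {\<sigma>..} s
      \<le> emeasure lborel (level_set 1 s) * (ennreal (1 * s powr (-p)) * indicator {\<sigma>..} s)"
  proof (cases "\<sigma> \<le> s")
    case True
    then have s: "s > 0" using \<sigma> by simp
    have "Atilde A s * ennreal (s powr (-1 - p))
        \<le> (ennreal s * emeasure lborel (level_set 1 s)) * ennreal (s powr (-1 - p))"
      by (rule mult_right_mono[OF Atilde_le_level_set[OF s]]) simp
    also have "\<dots> = emeasure lborel (level_set 1 s) * ennreal (s powr (-p))"
      using s by (simp add: powr_neg_conj_exp[symmetric] ac_simps)
    finally show ?thesis using True by simp
  qed simp
qed

lemma Atilde_tail_ge_level_set: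
  assumes \<sigma>: "\<sigma> > 0"
  shows "(\<integral>\<^sup>+ s. emeasure lborel (level_set 2 s) * (ennreal (1 / 2 * s powr (-p)) * indicator {\<sigma>..} s) \<partial>lborel)
    \<le> Atilde_tail n A \<sigma>"
  unfolding Atilde_tail_def
proof (intro nn_integral_mono)
  fix s :: real
  show "emeasure lborel (level_set 2 s) * (ennreal (1 / 2 * s powr (-p)) * indicator {\<sigma>..} s)
      \<le> Atilde A s * ennreal (s powr (-1 - p)) * indicator {\<sigma>..} s"
  proof (cases "\<sigma> \<le> s")
    case True
    then have s: "s > 0" using \<sigma> by simp
    have "emeasure lborel (level_set 2 s) * ennreal (1 / 2 * s powr (-p))
        = ennreal (s / 2) * emeasure lborel (level_set 2 s) * ennreal (s powr (-1 - p))"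
    proof -
      have "1 / 2 * s powr (-p) = s / 2 * s powr (-1 - p)"
        using mult_powr_minus_1_minus_p[OF s] by simp
      then have "ennreal (1 / 2 * s powr (-p)) = ennreal (s / 2 * s powr (-1 - p))" by (rule arg_cong)
      also have "\<dots> = ennreal (s / 2) * ennreal (s powr (-1 - p))" using s by (intro ennreal_mult) auto
      finally show ?thesis by (simp add: ac_simps)
    qed
    also have "\<dots> \<le> Atilde A s * ennreal (s powr (-1 - p))"
      using Atilde_ge_level_set[OF s] by (rule mult_right_mono) simp
    finally show ?thesis using True by simp
  qed simp
qed

end
context young_C123
begin

lemma Atilde_tail_finite:
  assumes \<sigma>: "\<sigma> > 0"
  shows "Atilde_tail n A \<sigma> < \<infinity>"
proof -
  define f where "f \<tau> = ennreal (\<sigma> powr (1 - p) / (p - 1)) * indicator {0..1} \<tau>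
    + ennreal (1 / (p - 1)) * (ennreal ((\<tau> / Aext \<tau>) powr (1 / (real n - 1))) * indicator {1..} \<tau>)"
    for \<tau> :: real
  have "Atilde_tail n A \<sigma>
      \<le> (\<integral>\<^sup>+ \<tau>. ennreal (1 * max \<sigma> (1 * Aext \<tau> / \<tau>) powr (1 - p) / (p - 1)) * indicator {0..} \<tau> \<partial>lborel)"
    using Atilde_tail_le_level_set[OF \<sigma>] nn_integral_level_set[OF \<sigma>, of 1 1] by simp
  also have "\<dots> \<le> (\<integral>\<^sup>+ \<tau>. f \<tau> \<partial>lborel)"
  proof (intro nn_integral_mono)
    fix \<tau> :: real
    show "ennreal (1 * max \<sigma> (1 * Aext \<tau> / \<tau>) powr (1 - p) / (p - 1)) * indicator {0..} \<tau> \<le> f \<tau>"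
    proof (cases "0 \<le> \<tau> \<and> \<tau> \<le> 1")
      case True
      have "max \<sigma> (Aext \<tau> / \<tau>) powr (1 - p) / (p - 1) \<le> \<sigma> powr (1 - p) / (p - 1)"
        using \<sigma> p_gt_1 by (intro divide_right_mono powr_mono2') auto
      then show ?thesis using True unfolding f_def by (simp add: ennreal_leI add_increasing2)
    next
      case False
      show ?thesis
      proof (cases "\<tau> \<ge> 1")
        case True
        have "Aext \<tau> > 0" using A_pos[of \<tau>] Aext_eq[of \<tau>] True by simp
        then have "max \<sigma> (Aext \<tau> / \<tau>) powr (1 - p) \<le> (Aext \<tau> / \<tau>) powr (1 - p)"
          using True p_gt_1 by (intro powr_mono2') auto
        then have "max \<sigma> (Aext \<tau> / \<tau>) powr (1 - p) / (p - 1)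
            \<le> 1 / (p - 1) * (\<tau> / Aext \<tau>) powr (1 / (real n - 1))"
          using p_gt_1 by (simp add: powr_one_minus_p divide_right_mono)
        then show ?thesis using True p_gt_1 unfolding f_def
          by (simp add: ennreal_mult[symmetric] ennreal_leI add_increasing)
      qed (use False in \<open>simp add: f_def\<close>)
    qed
  qed
  also have "\<dots> = ennreal (\<sigma> powr (1 - p) / (p - 1)) * emeasure lborel {0..1::real}
      + ennreal (1 / (p - 1)) * (\<integral>\<^sup>+ \<tau>. ennreal ((\<tau> / Aext \<tau>) powr (1 / (real n - 1))) * indicator {1..} \<tau> \<partial>lborel)"
    unfolding f_def by (subst nn_integral_add) (auto simp: nn_integral_cmult)
  also have "\<dots> < \<infinity>"
    using C1_integral by (simp add: ennreal_mult_less_top)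
  finally show ?thesis .
qed

text \<open>Monotone convergence as \<open>\<sigma> \<rightarrow> 0\<close> in the level set formula, combined with (C3).\<close>
lemma Atilde_tail_unbounded: "\<exists>\<sigma>>0. ennreal M \<le> Atilde_tail n A \<sigma>"
proof -
  define f where "f k \<tau> = ennreal (1 / 2 * max (1 / Suc k) (2 * Aext \<tau> / \<tau>) powr (1 - p) / (p - 1))
    * indicator {0<..1} \<tau>" for k :: nat and \<tau> :: real
  have f_measurable: "f k \<in> borel_measurable lborel" for k unfolding f_def by measurable
  have f_le: "(\<integral>\<^sup>+ \<tau>. f k \<tau> \<partial>lborel) \<le> Atilde_tail n A (1 / Suc k)" for k
  proof -
    have "(\<integral>\<^sup>+ \<tau>. f k \<tau> \<partial>lborel)
        \<le> (\<integral>\<^sup>+ \<tau>. ennreal (1 / 2 * max (1 / Suc k) (2 * Aext \<tau> / \<tau>) powr (1 - p) / (p - 1))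
             * indicator {0..} \<tau> \<partial>lborel)"
      unfolding f_def by (intro nn_integral_mono) (auto split: split_indicator)
    also have "\<dots> \<le> Atilde_tail n A (1 / Suc k)"
      using nn_integral_level_set[of "1 / Suc k" 2 "1 / 2"] Atilde_tail_ge_level_set[of "1 / Suc k"] by simp
    finally show ?thesis .
  qed
  have "incseq f"
  proof (intro incseq_SucI le_funI)
    fix k \<tau>
    have "1 / real (Suc (Suc k)) \<le> 1 / real (Suc k)" by (rule divide_left_mono) auto
    then have "max (1 / Suc k) (2 * Aext \<tau> / \<tau>) powr (1 - p) \<le> max (1 / Suc (Suc k)) (2 * Aext \<tau> / \<tau>) powr (1 - p)"
      using p_gt_1 by (intro powr_mono2') (auto simp: le_max_iff_disj less_max_iff_disj)
    then show "f k \<tau> \<le> f (Suc k) \<tau>"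
      unfolding f_def using p_gt_1 by (auto intro!: ennreal_leI divide_right_mono split: split_indicator)
  qed
  define c where "c = 1 / 2 * 2 powr (1 - p) / (p - 1)"
  have c: "c > 0" unfolding c_def using p_gt_1 by simp
  have SUP_f: "ennreal c * (ennreal ((\<tau> / Aext \<tau>) powr (1 / (real n - 1))) * indicator {0<..1} \<tau>) \<le> (SUP k. f k \<tau>)"
    for \<tau>
  proof (cases "\<tau> \<in> {0<..1}")
    case True
    then have \<tau>: "\<tau> > 0" "Aext \<tau> > 0" using A_pos[of \<tau>] Aext_eq[of \<tau>] by auto
    obtain k :: nat where "inverse (Suc k) < 2 * Aext \<tau> / \<tau>"
      using reals_Archimedean[of "2 * Aext \<tau> / \<tau>"] \<tau> by auto
    then have k: "1 / Suc k \<le> 2 * Aext \<tau> / \<tau>" by (simp add: inverse_eq_divide)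
    have "c * (\<tau> / Aext \<tau>) powr (1 / (real n - 1)) = 1 / 2 * (2 * Aext \<tau> / \<tau>) powr (1 - p) / (p - 1)"
      using \<tau> by (simp add: c_def powr_one_minus_p[symmetric] powr_mult[symmetric])
    also have "\<dots> = 1 / 2 * max (1 / Suc k) (2 * Aext \<tau> / \<tau>) powr (1 - p) / (p - 1)"
      using k by (simp add: max_absorb2)
    finally have "ennreal c * (ennreal ((\<tau> / Aext \<tau>) powr (1 / (real n - 1))) * indicator {0<..1} \<tau>) = f k \<tau>"
      unfolding f_def using True c by (simp add: ennreal_mult[symmetric])
    also have "\<dots> \<le> (SUP k. f k \<tau>)" by (rule SUP_upper) simp
    finally show ?thesis .
  qed simp
  have "\<infinity> = ennreal c * (\<integral>\<^sup>+ \<tau>. ennreal ((\<tau> / Aext \<tau>) powr (1 / (real n - 1))) * indicator {0<..1} \<tau> \<partial>lborel)"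
    using C3_integral c by (simp add: ennreal_mult_top)
  also have "\<dots> = (\<integral>\<^sup>+ \<tau>. ennreal c * (ennreal ((\<tau> / Aext \<tau>) powr (1 / (real n - 1))) * indicator {0<..1} \<tau>) \<partial>lborel)"
    by (rule nn_integral_cmult[symmetric]) measurable
  also have "\<dots> \<le> (\<integral>\<^sup>+ \<tau>. (SUP k. f k \<tau>) \<partial>lborel)"
    by (intro nn_integral_mono SUP_f)
  also have "\<dots> = (SUP k. \<integral>\<^sup>+ \<tau>. f k \<tau> \<partial>lborel)"
    by (rule nn_integral_monotone_convergence_SUP[OF \<open>incseq f\<close> f_measurable])
  also have "\<dots> \<le> (SUP k. Atilde_tail n A (1 / Suc k))"
    by (intro SUP_mono) (use f_le in blast)
  finally have SUP_eq: "(SUP k. Atilde_tail n A (1 / Suc k)) = \<infinity>"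
    by (simp add: top_unique)
  have "ennreal M < (SUP k. Atilde_tail n A (1 / Suc k))" unfolding SUP_eq by simp
  then obtain k where "ennreal M < Atilde_tail n A (1 / Suc k)" by (auto simp: less_SUP_iff)
  then show ?thesis by (intro exI[of _ "1 / Suc k"]) auto
qed

end
context young_C123
begin

lemma funE_ge_Atilde:
  assumes \<sigma>: "\<sigma> > 0"
  shows "ennreal (real n - 1) * Atilde A \<sigma> \<le> funE n A \<sigma>"
proof -
  have "(\<integral>\<^sup>+ s. (ennreal (1 / \<sigma>) * Atilde A \<sigma>) * (ennreal (s powr (-p)) * indicator {\<sigma>..} s) \<partial>lborel)
      \<le> Atilde_tail n A \<sigma>"
    unfolding Atilde_tail_def
  proof (intro nn_integral_mono)
    fix s :: real
    show "(ennreal (1 / \<sigma>) * Atilde A \<sigma>) * (ennreal (s powr (-p)) * indicator {\<sigma>..} s)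
        \<le> Atilde A s * ennreal (s powr (-1 - p)) * indicator {\<sigma>..} s"
    proof (cases "\<sigma> \<le> s")
      case True
      then have s: "s > 0" using \<sigma> by simp
      have "ennreal (1 / \<sigma>) * ennreal (s powr (-p)) = ennreal (s / \<sigma>) * ennreal (s powr (-1 - p))"
        using \<sigma> s by (simp add: ennreal_mult[symmetric] mult_powr_minus_1_minus_p[symmetric, OF s])
      then have "(ennreal (1 / \<sigma>) * Atilde A \<sigma>) * ennreal (s powr (-p))
          = (ennreal (s / \<sigma>) * Atilde A \<sigma>) * ennreal (s powr (-1 - p))"
        by (metis mult.assoc mult.commute)
      also have "\<dots> \<le> Atilde A s * ennreal (s powr (-1 - p))"
        using Atilde_superlinear[OF \<sigma> True] by (rule mult_right_mono) simp
      finally show ?thesis using True by simp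
    qed simp
  qed
  moreover have "(\<integral>\<^sup>+ s. (ennreal (1 / \<sigma>) * Atilde A \<sigma>) * (ennreal (s powr (-p)) * indicator {\<sigma>..} s) \<partial>lborel)
      = (ennreal (1 / \<sigma>) * Atilde A \<sigma>) * ennreal (\<sigma> powr (1 - p) / (p - 1))"
    by (subst nn_integral_cmult) (simp_all add: nn_integral_powr_atLeast[OF p_gt_1 \<sigma>])
  ultimately have le: "(ennreal (1 / \<sigma>) * Atilde A \<sigma>) * ennreal (\<sigma> powr (1 - p) / (p - 1))
      \<le> Atilde_tail n A \<sigma>" by simp
  have "ennreal (real n - 1) = ennreal (\<sigma> powr p) * ennreal (1 / \<sigma>) * ennreal (\<sigma> powr (1 - p) / (p - 1))"
  proof -
    have "\<sigma> powr p * (1 / \<sigma>) * (\<sigma> powr (1 - p) / (p - 1)) = (\<sigma> powr p * \<sigma> powr (1 - p)) / \<sigma> / (p - 1)"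
      by simp
    also have "\<sigma> powr p * \<sigma> powr (1 - p) = \<sigma>" using \<sigma> by (simp add: powr_add[symmetric])
    finally show ?thesis using \<sigma> p_gt_1 p_minus_1 n_minus_1_pos by (simp add: ennreal_mult[symmetric])
  qed
  then have "ennreal (real n - 1) * Atilde A \<sigma>
      = ennreal (\<sigma> powr p) * ((ennreal (1 / \<sigma>) * Atilde A \<sigma>) * ennreal (\<sigma> powr (1 - p) / (p - 1)))"
    by (simp add: ac_simps)
  also have "\<dots> \<le> ennreal (\<sigma> powr p) * Atilde_tail n A \<sigma>" using le by (rule mult_left_mono) simp
  finally show ?thesis unfolding funE_def .
qed

lemma funE_finite: "\<sigma> > 0 \<Longrightarrow> funE n A \<sigma> < \<infinity>"
  unfolding funE_def using Atilde_tail_finite by (simp add: ennreal_mult_less_top)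

lemma funE_0: "funE n A 0 = 0"
  unfolding funE_def using p_gt_1 by simp

lemma Atilde_finite: "Atilde A s < \<infinity>"
proof (cases "s > 0")
  case True
  have "ennreal (real n - 1) * Atilde A s < \<infinity>"
    using funE_ge_Atilde[OF True] funE_finite[OF True] by (simp add: le_less_trans)
  then show ?thesis using n_minus_1_pos by (auto simp: ennreal_mult_less_top)
qed (simp add: Atilde_nonpos)

text \<open>If \<open>A(\<tau>) \<ge> s \<tau>\<close> for all \<open>\<tau>\<close>, then \<open>\<tau>/A(\<tau>) \<le> 1/s\<close> and the integral in (C3) would be finite.\<close>
lemma Atilde_pos:
  assumes s: "s > 0"
  shows "Atilde A s > 0"
proof (rule ccontr)
  assume "\<not> Atilde A s > 0"
  then have "Atilde A s = 0" by simp
  then have ge: "s * \<tau> \<le> A \<tau>" if "\<tau> \<ge> 0" for \<tau>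
    using Atilde_ge[OF that, of s] by (simp add: ennreal_eq_0_iff)
  have "(\<integral>\<^sup>+ t. ennreal ((t / Aext t) powr (1 / (real n - 1))) * indicator {0<..1} t \<partial>lborel)
      \<le> (\<integral>\<^sup>+ (t::real). ennreal ((1 / s) powr (1 / (real n - 1))) * indicator {0<..1} t \<partial>lborel)"
  proof (intro nn_integral_mono)
    fix t :: real
    show "ennreal ((t / Aext t) powr (1 / (real n - 1))) * indicator {0<..1} t
        \<le> ennreal ((1 / s) powr (1 / (real n - 1))) * indicator {0<..1} t"
    proof (cases "t \<in> {0<..1}")
      case True
      then have t: "t > 0" "Aext t > 0" using A_pos[of t] Aext_eq[of t] by auto
      have "t / Aext t \<le> 1 / s" using ge[of t] t s Aext_eq[of t] by (simp add: field_simps)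
      then have "(t / Aext t) powr (1 / (real n - 1)) \<le> (1 / s) powr (1 / (real n - 1))"
        using t n_minus_1_pos by (intro powr_mono2) auto
      then show ?thesis using True by (simp add: ennreal_leI)
    qed simp
  qed
  also have "\<dots> < \<infinity>" by (simp add: nn_integral_cmult_indicator ennreal_mult_less_top)
  finally show False using C3_integral by simp
qed

definition Atilde_real :: "real \<Rightarrow> real" where
  "Atilde_real s = enn2real (Atilde A s)"

lemma Atilde_eq_ennreal: "Atilde A s = ennreal (Atilde_real s)"
  unfolding Atilde_real_def using Atilde_finite by simp

lemma Atilde_real_nonneg: "Atilde_real s \<ge> 0"
  unfolding Atilde_real_def by simp

lemma Atilde_real_pos: "s > 0 \<Longrightarrow> Atilde_real s > 0"
  using Atilde_pos[of s] by (simp add: Atilde_eq_ennreal)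

lemma mono_Atilde_real: "mono Atilde_real"
  unfolding mono_def Atilde_real_def using Atilde_mono Atilde_finite by (auto intro!: enn2real_mono)

lemma Atilde_real_measurable[measurable]: "Atilde_real \<in> borel_measurable borel"
  by (rule borel_measurable_mono[OF mono_Atilde_real])

definition E :: "real \<Rightarrow> real" where
  "E \<sigma> = enn2real (funE n A \<sigma>)"

lemma funE_eq_ennreal: "\<sigma> \<ge> 0 \<Longrightarrow> funE n A \<sigma> = ennreal (E \<sigma>)"
  unfolding E_def using funE_finite[of \<sigma>] funE_0 by (cases "\<sigma> = 0") auto

lemma E_nonneg: "E \<sigma> \<ge> 0"
  unfolding E_def by simp

lemma E_0: "E 0 = 0"
  unfolding E_def by (simp add: funE_0)

lemma funB_eq_SUP: "funB n A t = (SUP \<sigma>\<in>{0..}. ennreal (\<sigma> * t - E \<sigma>))"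
proof -
  have "funB n A t = (SUP \<sigma>\<in>{0..}. ennreal (\<sigma> * t) - funE n A \<sigma>)"
    using n_ge_2 by (simp add: funB_eq_young_conj_funE young_conj_def)
  also have "\<dots> = (SUP \<sigma>\<in>{0..}. ennreal (\<sigma> * t - E \<sigma>))"
    by (intro SUP_cong refl) (simp add: funE_eq_ennreal ennreal_minus E_nonneg)
  finally show ?thesis .
qed

lemma E_ge_Atilde:
  assumes "\<sigma> \<ge> 0" "\<tau> \<ge> 0"
  shows "(real n - 1) * (\<sigma> * \<tau> - A \<tau>) \<le> E \<sigma>"
proof (cases "\<sigma> = 0")
  case True
  have "0 \<le> (real n - 1) * A \<tau>" using A_nonneg[OF assms(2)] n_minus_1_pos by simp
  then show ?thesis using True E_nonneg[of \<sigma>] by simp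
next
  case False
  then have \<sigma>: "\<sigma> > 0" using assms by simp
  have "ennreal ((real n - 1) * (\<sigma> * \<tau> - A \<tau>)) = ennreal (real n - 1) * ennreal (\<sigma> * \<tau> - A \<tau>)"
    using n_minus_1_pos by (simp add: ennreal_mult')
  also have "\<dots> \<le> ennreal (real n - 1) * Atilde A \<sigma>" by (intro mult_left_mono Atilde_ge assms(2)) simp
  also have "\<dots> \<le> ennreal (E \<sigma>)" using funE_ge_Atilde[OF \<sigma>] funE_eq_ennreal assms by simp
  finally show ?thesis using E_nonneg[of \<sigma>] by simp
qed

lemma E_ge_linear:
  assumes "0 < \<sigma>0" "\<sigma>0 \<le> \<sigma>"
  shows "(real n - 1) * (\<sigma> / \<sigma>0) * Atilde_real \<sigma>0 \<le> E \<sigma>"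
proof -
  have "ennreal ((real n - 1) * (\<sigma> / \<sigma>0) * Atilde_real \<sigma>0)
      = ennreal (real n - 1) * (ennreal (\<sigma> / \<sigma>0) * Atilde A \<sigma>0)"
    using n_minus_1_pos assms Atilde_real_nonneg
    by (simp add: Atilde_eq_ennreal ennreal_mult[symmetric] mult.assoc)
  also have "\<dots> \<le> ennreal (real n - 1) * Atilde A \<sigma>" by (intro mult_left_mono Atilde_superlinear assms) simp
  also have "\<dots> \<le> ennreal (E \<sigma>)" using funE_ge_Atilde[of \<sigma>] funE_eq_ennreal[of \<sigma>] assms by simp
  finally show ?thesis using E_nonneg[of \<sigma>] by simp
qed

lemma powr_conj_exp_scale:
  assumes "0 < l" "\<sigma> \<ge> 0"
  shows "(l ^ (n - 1) * \<sigma>) powr p = l ^ n * \<sigma> powr p"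
proof -
  have "(l ^ (n - 1)) powr p = l powr (real (n - 1) * p)"
    using assms by (simp add: powr_realpow[symmetric] powr_powr)
  also have "\<dots> = l powr ((real n - 1) * p)" by (simp only: of_nat_n_minus_1)
  also have "\<dots> = l ^ n" using n_minus_1_times_p assms by (simp add: powr_realpow)
  finally show ?thesis using assms by (simp add: powr_mult)
qed

lemma E_scale:
  assumes "0 < l" "l \<le> 1" "\<sigma> \<ge> 0"
  shows "l ^ n * E \<sigma> \<le> E (l ^ (n - 1) * \<sigma>)"
proof -
  have "l ^ (n - 1) * \<sigma> \<le> \<sigma>" using assms by (simp add: mult_left_le_one_le power_le_one)
  then have "Atilde_tail n A \<sigma> \<le> Atilde_tail n A (l ^ (n - 1) * \<sigma>)" by (rule Atilde_tail_antimono)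
  then have "ennreal (l ^ n) * funE n A \<sigma> \<le> funE n A (l ^ (n - 1) * \<sigma>)"
    unfolding funE_def powr_conj_exp_scale[OF assms(1,3)] using assms
    by (simp add: ennreal_mult mult.assoc mult_left_mono)
  then show ?thesis using assms E_nonneg by (simp add: funE_eq_ennreal ennreal_mult[symmetric])
qed

lemma Atilde_tail_gap:
  assumes a: "0 < a" "a \<le> \<sigma>"
  shows "Atilde_tail n A \<sigma> + ennreal ((\<sigma> - a) * Atilde_real a * \<sigma> powr (-1 - p)) \<le> Atilde_tail n A a"
proof -
  define f where "f s = ennreal (Atilde_real s * s powr (-1 - p))" for s
  define c where "c = Atilde_real a * \<sigma> powr (-1 - p)"
  have tail_eq: "Atilde_tail n A t = (\<integral>\<^sup>+ s. f s * indicator {t..} s \<partial>lborel)" for t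
    unfolding Atilde_tail_def f_def
    by (intro nn_integral_cong) (simp add: Atilde_eq_ennreal ennreal_mult' Atilde_real_nonneg)
  have "ennreal ((\<sigma> - a) * Atilde_real a * \<sigma> powr (-1 - p)) = ennreal c * emeasure lborel {a..<\<sigma>}"
    using a Atilde_real_nonneg[of a] unfolding c_def by (simp add: ennreal_mult[symmetric] ac_simps)
  also have "\<dots> = (\<integral>\<^sup>+ s. ennreal c * indicator {a..<\<sigma>} s \<partial>lborel)"
    by (simp add: nn_integral_cmult_indicator)
  finally have "Atilde_tail n A \<sigma> + ennreal ((\<sigma> - a) * Atilde_real a * \<sigma> powr (-1 - p))
      = (\<integral>\<^sup>+ s. f s * indicator {\<sigma>..} s + ennreal c * indicator {a..<\<sigma>} s \<partial>lborel)"
    unfolding tail_eq f_def by (subst nn_integral_add) auto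
  also have "\<dots> \<le> (\<integral>\<^sup>+ s. f s * indicator {a..} s \<partial>lborel)"
  proof (intro nn_integral_mono)
    fix s :: real
    have "ennreal c \<le> f s" if "a \<le> s" "s < \<sigma>"
      unfolding f_def c_def using that a p_gt_1 Atilde_real_nonneg mono_Atilde_real
      by (intro ennreal_leI mult_mono powr_mono2') (auto simp: mono_def)
    then show "f s * indicator {\<sigma>..} s + ennreal c * indicator {a..<\<sigma>} s \<le> f s * indicator {a..} s"
      using a by (auto split: split_indicator)
  qed
  also have "\<dots> = Atilde_tail n A a" by (rule tail_eq[symmetric])
  finally show ?thesis .
qed

text \<open>The gap in \<open>Atilde_tail\<close> between \<open>l\<^sup>n\<^sup>-\<^sup>1\<sigma>\<close> and \<open>\<sigma>\<close> makes \<open>E_scale\<close> strict, uniformly for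
  \<open>\<sigma> \<ge> \<sigma>\<^sub>1\<close>.\<close>
lemma E_scale_strict:
  assumes l: "0 < l" "l < 1" and \<sigma>1: "0 < \<sigma>1" "\<sigma>1 \<le> \<sigma>"
  shows "l ^ n * (E \<sigma> + (1 - l ^ (n - 1)) * Atilde_real (l ^ (n - 1) * \<sigma>1)) \<le> E (l ^ (n - 1) * \<sigma>)"
proof -
  define L where "L = l ^ (n - 1)"
  have L: "0 < L" "L < 1" unfolding L_def using l n_ge_2 by (auto simp: power_less_one_iff)
  have \<sigma>: "\<sigma> > 0" using \<sigma>1 by simp
  define K where "K = (\<sigma> - L * \<sigma>) * Atilde_real (L * \<sigma>1) * \<sigma> powr (-1 - p)"
  have K: "K \<ge> 0" unfolding K_def using L \<sigma> Atilde_real_nonneg by simp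
  have "Atilde_real (L * \<sigma>1) \<le> Atilde_real (L * \<sigma>)"
    using mono_Atilde_real L \<sigma>1 by (simp add: mono_def)
  then have "ennreal K \<le> ennreal ((\<sigma> - L * \<sigma>) * Atilde_real (L * \<sigma>) * \<sigma> powr (-1 - p))"
    unfolding K_def using L \<sigma> by (intro ennreal_leI mult_right_mono mult_left_mono) auto
  then have "Atilde_tail n A \<sigma> + ennreal K \<le> Atilde_tail n A (L * \<sigma>)"
    using Atilde_tail_gap[of "L * \<sigma>" \<sigma>] L \<sigma> by (meson add_left_mono order_trans mult_pos_pos
        mult_left_le_one_le less_imp_le)
  then have "ennreal (l ^ n * \<sigma> powr p) * (Atilde_tail n A \<sigma> + ennreal K) \<le> funE n A (L * \<sigma>)"
    unfolding funE_def L_def using powr_conj_exp_scale[OF l(1), of \<sigma>] \<sigma> by (simp add: mult_left_mono)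
  moreover have "\<sigma> powr p * K = (1 - L) * Atilde_real (L * \<sigma>1)"
  proof -
    have "\<sigma> * (\<sigma> powr p * \<sigma> powr (-1 - p)) = 1"
      using \<sigma> by (simp add: powr_add[symmetric] powr_minus_divide)
    moreover have "\<sigma> powr p * K = (1 - L) * Atilde_real (L * \<sigma>1) * (\<sigma> * (\<sigma> powr p * \<sigma> powr (-1 - p)))"
      unfolding K_def by (simp add: algebra_simps)
    ultimately show ?thesis by simp
  qed
  moreover have "ennreal (l ^ n * \<sigma> powr p) * (Atilde_tail n A \<sigma> + ennreal K)
      = ennreal (l ^ n * (E \<sigma> + \<sigma> powr p * K))"
    using funE_eq_ennreal[of \<sigma>] \<sigma> l K E_nonneg unfolding funE_def
    by (simp add: ennreal_mult ennreal_plus distrib_left ac_simps)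
  ultimately show ?thesis
    using funE_eq_ennreal[of "L * \<sigma>"] L \<sigma> E_nonneg unfolding L_def by simp
qed

lemma E_ge_power: "\<exists>\<sigma>0>0. \<forall>\<sigma>. 0 < \<sigma> \<and> \<sigma> \<le> \<sigma>0 \<longrightarrow> M * \<sigma> powr p \<le> E \<sigma>"
proof -
  obtain \<sigma>0 where \<sigma>0: "\<sigma>0 > 0" "ennreal (max M 0) \<le> Atilde_tail n A \<sigma>0"
    using Atilde_tail_unbounded by blast
  have "M * \<sigma> powr p \<le> E \<sigma>" if "0 < \<sigma>" "\<sigma> \<le> \<sigma>0" for \<sigma>
  proof -
    have "ennreal (max M 0) \<le> Atilde_tail n A \<sigma>" using \<sigma>0(2) Atilde_tail_antimono[OF that(2)] by simp
    then have "ennreal (\<sigma> powr p) * ennreal (max M 0) \<le> funE n A \<sigma>"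
      unfolding funE_def by (rule mult_left_mono) simp
    then have "\<sigma> powr p * max M 0 \<le> E \<sigma>"
      using funE_eq_ennreal[of \<sigma>] that E_nonneg by (simp add: ennreal_mult[symmetric])
    moreover have "M * \<sigma> powr p \<le> max M 0 * \<sigma> powr p" by (intro mult_right_mono) auto
    ultimately show ?thesis by (simp add: mult.commute)
  qed
  then show ?thesis using \<sigma>0(1) by blast
qed

end
context young_C123
begin

definition B_real :: "real \<Rightarrow> real" where
  "B_real t = enn2real (funB n A t)"

lemma funB_le_A:
  assumes "t \<ge> 0"
  shows "funB n A t \<le> ennreal ((real n - 1) * A (t / (real n - 1)))"
  unfolding funB_eq_SUP
proof (rule SUP_least, rule ennreal_leI)
  fix \<sigma> :: real assume "\<sigma> \<in> {0..}"
  then have "(real n - 1) * (\<sigma> * (t / (real n - 1)) - A (t / (real n - 1))) \<le> E \<sigma>"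
    using assms n_minus_1_pos by (intro E_ge_Atilde) auto
  then show "\<sigma> * t - E \<sigma> \<le> (real n - 1) * A (t / (real n - 1))"
    using n_minus_1_pos by (simp add: right_diff_distrib)
qed

lemma funB_eq_ennreal: "t \<ge> 0 \<Longrightarrow> funB n A t = ennreal (B_real t)"
  unfolding B_real_def using funB_le_A[of t] by (simp add: top.not_eq_extremum le_less_trans)

lemma B_real_nonneg: "B_real t \<ge> 0"
  unfolding B_real_def by simp

lemma B_real_ge:
  assumes "\<sigma> \<ge> 0" "t \<ge> 0"
  shows "\<sigma> * t - E \<sigma> \<le> B_real t"
proof -
  have "ennreal (\<sigma> * t - E \<sigma>) \<le> funB n A t" unfolding funB_eq_SUP by (rule SUP_upper) (use assms in simp)
  then show ?thesis using funB_eq_ennreal[OF assms(2)] B_real_nonneg[of t] by simp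
qed

lemma B_real_le:
  assumes "t \<ge> 0" "c \<ge> 0" "\<And>\<sigma>. \<sigma> \<ge> 0 \<Longrightarrow> \<sigma> * t - E \<sigma> \<le> c"
  shows "B_real t \<le> c"
proof -
  have "funB n A t \<le> ennreal c"
    unfolding funB_eq_SUP by (rule SUP_least) (use assms(3) in \<open>auto intro: ennreal_leI\<close>)
  then show ?thesis using funB_eq_ennreal[OF assms(1)] assms(2) by simp
qed

lemma B_real_0: "B_real 0 = 0"
  using B_real_le[of 0 0] E_nonneg B_real_nonneg[of 0] by (simp add: antisym)

lemma convex_on_B_real: "convex_on {0..} B_real"
proof (rule convex_onI)
  fix t x y :: real assume t: "0 < t" "t < 1" and xy: "x \<in> {0..}" "y \<in> {0..}"
  show "B_real ((1 - t) *\<^sub>R x + t *\<^sub>R y) \<le> (1 - t) * B_real x + t * B_real y"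
  proof (rule B_real_le)
    fix \<sigma> :: real assume \<sigma>: "\<sigma> \<ge> 0"
    have "\<sigma> * ((1 - t) *\<^sub>R x + t *\<^sub>R y) - E \<sigma> = (1 - t) * (\<sigma> * x - E \<sigma>) + t * (\<sigma> * y - E \<sigma>)"
      by (simp add: algebra_simps)
    also have "\<dots> \<le> (1 - t) * B_real x + t * B_real y"
      using t xy \<sigma> by (intro add_mono mult_left_mono B_real_ge) auto
    finally show "\<sigma> * ((1 - t) *\<^sub>R x + t *\<^sub>R y) - E \<sigma> \<le> (1 - t) * B_real x + t * B_real y" .
  qed (use t xy B_real_nonneg in auto)
qed (rule convex_real_interval)

lemma continuous_on_B_real: "continuous_on {0..} B_real"
  by (rule convex_on_continuous_on_nonneg_reals[OF convex_on_B_real B_real_0 B_real_nonneg])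

text \<open>Substituting \<open>\<sigma> = l\<^sup>n\<^sup>-\<^sup>1\<sigma>'\<close> in the supremum defining \<open>B(l y)\<close> and using \<open>E_scale\<close>.\<close>
lemma B_real_scale:
  assumes l: "0 < l" "l \<le> 1" and y: "y \<ge> 0"
  shows "B_real (l * y) \<le> l ^ n * B_real y"
proof (rule B_real_le)
  fix \<sigma> :: real assume \<sigma>: "\<sigma> \<ge> 0"
  define \<sigma>' where "\<sigma>' = \<sigma> / l ^ (n - 1)"
  have \<sigma>': "\<sigma> = l ^ (n - 1) * \<sigma>'" "\<sigma>' \<ge> 0" unfolding \<sigma>'_def using l \<sigma> by auto
  have "\<sigma> * (l * y) - E \<sigma> = l ^ n * (\<sigma>' * y) - E (l ^ (n - 1) * \<sigma>')"
    unfolding \<sigma>'(1) by (simp add: power_n_minus_1_times[symmetric] ac_simps)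
  also have "\<dots> \<le> l ^ n * (\<sigma>' * y - E \<sigma>')" using E_scale[OF l \<sigma>'(2)] by (simp add: algebra_simps)
  also have "\<dots> \<le> l ^ n * B_real y" using l \<sigma>'(2) y by (intro mult_left_mono B_real_ge) auto
  finally show "\<sigma> * (l * y) - E \<sigma> \<le> l ^ n * B_real y" .
qed (use l y B_real_nonneg in auto)

lemma B_real_ratio_mono:
  assumes "0 < x" "x \<le> y"
  shows "B_real x * y ^ n \<le> x ^ n * B_real y"
proof -
  have "B_real ((x / y) * y) \<le> (x / y) ^ n * B_real y" using assms by (intro B_real_scale) auto
  then show ?thesis using assms by (simp add: power_divide field_simps)
qed

text \<open>As in \<open>B_real_scale\<close>, but \<open>E_scale_strict\<close> gains a fixed amount \<open>\<kappa> > 0\<close> for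
  \<open>\<sigma>' \<ge> \<sigma>\<^sub>1 = B(y)/(2y)\<close>, while for \<open>\<sigma>' < \<sigma>\<^sub>1\<close> the supremand is at most \<open>l\<^sup>n B(y)/2\<close>.\<close>
lemma B_real_scale_strict:
  assumes l: "0 < l" "l < 1" and y: "y > 0" and By: "B_real y > 0"
  shows "B_real (l * y) < l ^ n * B_real y"
proof -
  define \<sigma>1 where "\<sigma>1 = B_real y / (2 * y)"
  have \<sigma>1: "\<sigma>1 > 0" unfolding \<sigma>1_def using By y by simp
  define \<kappa> where "\<kappa> = (1 - l ^ (n - 1)) * Atilde_real (l ^ (n - 1) * \<sigma>1)"
  have "l ^ (n - 1) < 1" using l n_ge_2 by (auto simp: power_less_one_iff)
  then have \<kappa>: "\<kappa> > 0" unfolding \<kappa>_def using l \<sigma>1 by (simp add: Atilde_real_pos)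
  define m where "m = max (B_real y - \<kappa>) (B_real y / 2)"
  have m: "m < B_real y" "m \<ge> 0" unfolding m_def using \<kappa> By by auto
  have "B_real (l * y) \<le> l ^ n * m"
  proof (rule B_real_le)
    fix \<sigma> :: real assume \<sigma>: "\<sigma> \<ge> 0"
    define \<sigma>' where "\<sigma>' = \<sigma> / l ^ (n - 1)"
    have \<sigma>': "\<sigma> = l ^ (n - 1) * \<sigma>'" "\<sigma>' \<ge> 0" unfolding \<sigma>'_def using l \<sigma> by auto
    have eq: "\<sigma> * (l * y) = l ^ n * (\<sigma>' * y)"
      unfolding \<sigma>'(1) by (simp add: power_n_minus_1_times[symmetric] ac_simps)
    show "\<sigma> * (l * y) - E \<sigma> \<le> l ^ n * m"
    proof (cases "\<sigma>1 \<le> \<sigma>'")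
      case True
      have "l ^ n * (E \<sigma>' + \<kappa>) \<le> E \<sigma>" unfolding \<sigma>'(1) \<kappa>_def by (rule E_scale_strict[OF l \<sigma>1 True])
      then have "\<sigma> * (l * y) - E \<sigma> \<le> l ^ n * (\<sigma>' * y - E \<sigma>' - \<kappa>)" unfolding eq by (simp add: algebra_simps)
      also have "\<dots> \<le> l ^ n * (B_real y - \<kappa>)"
        using B_real_ge[OF \<sigma>'(2), of y] y l by (intro mult_left_mono) auto
      also have "\<dots> \<le> l ^ n * m" unfolding m_def using l by (intro mult_left_mono) auto
      finally show ?thesis .
    next
      case False
      have "\<sigma> * (l * y) - E \<sigma> \<le> l ^ n * (\<sigma>' * y)" unfolding eq using E_nonneg[of \<sigma>] by simp
      also have "\<dots> \<le> l ^ n * (\<sigma>1 * y)" using False l y by (intro mult_left_mono mult_right_mono) auto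
      also have "\<sigma>1 * y = B_real y / 2" unfolding \<sigma>1_def using y by simp
      also have "l ^ n * (B_real y / 2) \<le> l ^ n * m" unfolding m_def using l by (intro mult_left_mono) auto
      finally show ?thesis .
    qed
  qed (use l y m in auto)
  also have "\<dots> < l ^ n * B_real y" using m l by simp
  finally show ?thesis .
qed

lemma B_real_ratio_strict_mono:
  assumes "0 < x" "x < y" "B_real y > 0"
  shows "B_real x * y ^ n < x ^ n * B_real y"
proof -
  have "B_real ((x / y) * y) < (x / y) ^ n * B_real y" using assms by (intro B_real_scale_strict) auto
  then show ?thesis using assms by (simp add: power_divide field_simps)
qed

lemma B_real_nontrivial: "\<exists>y>0. B_real y > 0"
proof -
  have "1 * (E 1 + 1) - E 1 \<le> B_real (E 1 + 1)" using E_nonneg[of 1] by (intro B_real_ge) auto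
  then show ?thesis using E_nonneg[of 1] by (intro exI[of _ "E 1 + 1"]) auto
qed

lemma conj_exp_young_ineq:
  assumes "\<sigma> \<ge> 0" "b \<ge> 0" "M > 0"
  shows "\<sigma> * b - M * \<sigma> powr p \<le> b ^ n / M ^ (n - 1)"
proof (cases "\<sigma> = 0")
  case False
  then have \<sigma>: "\<sigma> > 0" using assms by simp
  define q where "q = \<sigma> powr (1 / (real n - 1))"
  have q: "q > 0" unfolding q_def using \<sigma> by simp
  have "p = 1 + 1 / (real n - 1)" using p_minus_1 by simp
  then have \<sigma>_powr_p: "\<sigma> powr p = \<sigma> * q"
    using \<sigma> by (simp add: q_def powr_add)
  have q_power: "q ^ (n - 1) = \<sigma>"
    using \<sigma> n_minus_1_pos
    by (simp add: q_def powr_realpow[symmetric] powr_powr of_nat_n_minus_1)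
  show ?thesis
  proof (cases "b \<le> M * q")
    case True
    then have "\<sigma> * b \<le> \<sigma> * (M * q)" using \<sigma> by (intro mult_left_mono) auto
    then have "\<sigma> * b - M * \<sigma> powr p \<le> 0" unfolding \<sigma>_powr_p by (simp add: ac_simps)
    moreover have "0 \<le> b ^ n / M ^ (n - 1)" using assms by simp
    ultimately show ?thesis by linarith
  next
    case False
    then have "q ^ (n - 1) \<le> (b / M) ^ (n - 1)" using q assms by (intro power_mono) (auto simp: field_simps)
    then have "\<sigma> * b \<le> (b / M) ^ (n - 1) * b" using assms q_power by (intro mult_right_mono) auto
    also have "\<dots> = b ^ n / M ^ (n - 1)" using power_n_minus_1_times[of b] by (simp add: power_divide)
    moreover have "0 \<le> M * \<sigma> powr p" using assms by simp
    ultimately show ?thesis by linarith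
  qed
qed (use assms p_gt_1 in simp)

text \<open>Near \<open>0\<close>, \<open>E(\<sigma>) \<ge> M \<sigma>\<^sup>p\<close> bounds the supremand by \<open>b\<^sup>n/M\<^sup>n\<^sup>-\<^sup>1\<close> (\<open>conj_exp_young_ineq\<close>);
  away from \<open>0\<close>, \<open>E\<close> grows linearly and the supremand is negative for small \<open>b\<close>.\<close>
lemma B_real_ratio_tendsto_0: "((\<lambda>b. B_real b / b ^ n) \<longlongrightarrow> 0) (at_right 0)"
proof (rule order_tendstoI)
  fix a :: real assume "a < 0"
  then show "eventually (\<lambda>b. a < B_real b / b ^ n) (at_right 0)"
    using B_real_nonneg by (auto simp: eventually_at_right_field intro!: exI[of _ 1] less_le_trans[OF _ divide_nonneg_nonneg])
next
  fix \<epsilon> :: real assume \<epsilon>: "0 < \<epsilon>"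
  define M where "M = (2 / \<epsilon>) powr (1 / (real n - 1))"
  have M: "M > 0" unfolding M_def using \<epsilon> by simp
  have M_power: "M ^ (n - 1) = 2 / \<epsilon>"
    using \<epsilon> n_minus_1_pos by (simp add: M_def powr_realpow[symmetric] powr_powr of_nat_n_minus_1)
  obtain \<sigma>0 where \<sigma>0: "\<sigma>0 > 0" "\<And>\<sigma>. 0 < \<sigma> \<and> \<sigma> \<le> \<sigma>0 \<Longrightarrow> M * \<sigma> powr p \<le> E \<sigma>"
    using E_ge_power[of M] by blast
  define \<delta> where "\<delta> = (real n - 1) * Atilde_real \<sigma>0 / \<sigma>0"
  have \<delta>: "\<delta> > 0" unfolding \<delta>_def using \<sigma>0(1) n_minus_1_pos Atilde_real_pos[of \<sigma>0] by simp
  have bound: "B_real b \<le> b ^ n / M ^ (n - 1)" if b: "0 < b" "b < \<delta>" for b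
  proof (rule B_real_le)
    fix \<sigma> :: real assume \<sigma>: "\<sigma> \<ge> 0"
    show "\<sigma> * b - E \<sigma> \<le> b ^ n / M ^ (n - 1)"
    proof (cases "\<sigma> \<le> \<sigma>0")
      case True
      then have "M * \<sigma> powr p \<le> E \<sigma>" using \<sigma>0(2)[of \<sigma>] \<sigma> E_0 p_gt_1 by (cases "\<sigma> = 0") auto
      then show ?thesis using conj_exp_young_ineq[OF \<sigma> _ M, of b] b by simp
    next
      case False
      have "(real n - 1) * (\<sigma> / \<sigma>0) * Atilde_real \<sigma>0 = \<sigma> * \<delta>"
        unfolding \<delta>_def by (simp add: field_simps)
      then have "\<sigma> * \<delta> \<le> E \<sigma>" using E_ge_linear[of \<sigma>0 \<sigma>] \<sigma>0(1) False by simp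
      moreover have "\<sigma> * b \<le> \<sigma> * \<delta>" using b \<sigma> by (intro mult_left_mono) auto
      moreover have "0 \<le> b ^ n / M ^ (n - 1)" using b M by simp
      ultimately show ?thesis by linarith
    qed
  qed (use b M in auto)
  show "eventually (\<lambda>b. B_real b / b ^ n < \<epsilon>) (at_right 0)"
    unfolding eventually_at_right_field
  proof (intro exI[of _ \<delta>] conjI allI impI)
    fix b :: real assume b: "0 < b" "b < \<delta>"
    have "B_real b / b ^ n \<le> 1 / M ^ (n - 1)" using bound[OF b] b by (simp add: divide_le_eq)
    also have "\<dots> < \<epsilon>" unfolding M_power using \<epsilon> by simp
    finally show "B_real b / b ^ n < \<epsilon>" .
  qed (rule \<delta>)
qed

sublocale regular_B n A B_real
proof
  show "1 \<le> n" using n_ge_2 by simp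
qed (simp_all add: funB_eq_ennreal B_real_nonneg B_real_0 continuous_on_B_real B_real_ratio_mono
    B_real_ratio_strict_mono B_real_nontrivial B_real_ratio_tendsto_0)

end

theorem lemma4p4:
  fixes n :: nat and A \<phi> :: "real \<Rightarrow> real"
  assumes "n \<ge> 1"
    and "young_function A" and "cond_C1 n A" and "cond_C2 A" and "cond_C3 n A"
    and "gauge_function n \<phi>"
  shows "\<forall>s t. 0 < s \<and> 0 < t \<longrightarrow>
           ennreal (funPsi n A \<phi> (s * t)) \<le> ennreal (\<phi> t) + ennreal (t ^ n) * funB n A s"
proof (cases "n = 1")
  case True
  then interpret regular_B_gauge 1 A A \<phi>
    using assms regular_B_dim_1 by (intro regular_B_gauge.intro regular_B_gauge_axioms.intro) simp_all
  show ?thesis using funPsi_le_ennreal True by simp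
next
  case False
  interpret young_C123 n A using assms False by unfold_locales simp_all
  interpret regular_B_gauge n A B_real \<phi> using assms(6) by unfold_locales
  show ?thesis using funPsi_le_ennreal by simp
qed

end
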